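(* Let $G_n$ be the level-$n$ graph approximation of the level-3 Sierpinski gasket $SG_3$. Then for $n\ge 2$ the number of spanning trees of $G_n$ is $$\tau(G_n)=2^{a_n}3^{b_n}5^{c_n}7^{d_n},$$ where $a_n=\frac{2}{5}(6^n-1)$, $b_n=\frac{1}{25}(13\cdot 6^n-15n+12)$, $c_n=\frac{1}{25}(3\cdot 6^n-15n-3)$, $d_n=\frac{1}{25}(7\cdot 6^n+15n-7)$.
   Context: The level-3 Sierpinski gasket $SG_3$ is the self-similar set generated by the $m=6$ similitudes of ratio $1/3$ of the plane mapping an equilateral triangle with vertex set $V_0=\{p_1,p_2,p_3\}$ onto the six upward-pointing triangles obtained when the triangle is subdivided into nine congruent equilateral triangles of side $1/3$ of the original. The approximating graphs are: $G_0$ is the complete graph (triangle) on $V_0$; for $n\ge1$, $V_n=\bigcup_{w\in\{1,\dots,6\}^n}F_w(V_0)$ and $G_n$ is the union over words $w$ of length $n$ of the complete graphs on $F_w(V_0)$, where $F_w=F_{w_1}\circ\cdots\circ F_{w_n}$. *)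

theory Defs
  imports Complex_Main
begin

definition sg_p1 :: complex where "sg_p1 = 0"
definition sg_p2 :: complex where "sg_p2 = 1"
definition sg_p3 :: complex where "sg_p3 = Complex (1/2) (sqrt 3 / 2)"

definition sg_V0 :: "complex set" where "sg_V0 = {sg_p1, sg_p2, sg_p3}"

text \<open>Translation part of the six similitudes F_1..F_6 of ratio 1/3: they map the
  big triangle onto the six upward-pointing triangles of side 1/3.\<close>

definition sg_shift :: "nat \<Rightarrow> complex" where
  "sg_shift i =
     (if i = 1 then 0
      else if i = 2 then sg_p2 / 3
      else if i = 3 then 2 * sg_p2 / 3
      else if i = 4 then sg_p3 / 3
      else if i = 5 then (sg_p2 + sg_p3) / 3
      else 2 * sg_p3 / 3)"

definition sg_F :: "nat \<Rightarrow> complex \<Rightarrow> complex" where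
  "sg_F i z = z / 3 + sg_shift i"

fun sg_Fw :: "nat list \<Rightarrow> complex \<Rightarrow> complex" where
  "sg_Fw [] = id"
| "sg_Fw (i # w) = sg_F i \<circ> sg_Fw w"

definition sg_words :: "nat \<Rightarrow> nat list set" where
  "sg_words n = {w. length w = n \<and> set w \<subseteq> {1..6}}"

definition sg_cells :: "nat \<Rightarrow> complex set set" where
  "sg_cells n = (\<lambda>w. sg_Fw w ` sg_V0) ` sg_words n"

definition sg_V :: "nat \<Rightarrow> complex set" where
  "sg_V n = \<Union> (sg_cells n)"

definition sg_E :: "nat \<Rightarrow> complex set set" where
  "sg_E n = {{x, y} | x y. x \<noteq> y \<and> (\<exists>C \<in> sg_cells n. x \<in> C \<and> y \<in> C)}"

definition edge_reach :: "'a set set \<Rightarrow> 'a \<Rightarrow> 'a \<Rightarrow> bool" where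
  "edge_reach T = (\<lambda>x y. \<exists>e \<in> T. e = {x, y})\<^sup>*\<^sup>*"

definition spanning_tree :: "'a set \<Rightarrow> 'a set set \<Rightarrow> 'a set set \<Rightarrow> bool" where
  "spanning_tree V E T \<longleftrightarrow>
     T \<subseteq> E \<and>
     (\<forall>x \<in> V. \<forall>y \<in> V. edge_reach T x y) \<and>
     (\<forall>e \<in> T. \<forall>x y. e = {x, y} \<longrightarrow> \<not> edge_reach (T - {e}) x y)"

definition num_spanning_trees :: "'a set \<Rightarrow> 'a set set \<Rightarrow> nat" where
  "num_spanning_trees V E = card {T. spanning_tree V E T}"

end

(*
  A spanning tree of G(n+1) restricts on each of the six copies of G(n) to a forest in which every
  vertex is joined to a corner of its copy. Conversely, six such forests glue to a spanning tree
  exactly when their corner connections, read on the ten-vertex skeleton formed by the corners of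
  the copies, close no cycle and leave no skeleton vertex cut off. Writing N n t for the number of
  such forests of G(n) whose corners are connected in way t (one of five), this gives
  N (n+1) s = sum over admissible type vectors (t_1, ..., t_6) of the products of the N n t_k.
  With the ansatz N n t = f n * w t, where w = 1, r, r, r, 3 r^2, the admissible vectors are
  enumerated by computation: the sums are 196 r^3, 420 r^4 (three times) and 2700 r^5. Hence
  f (n+1) = 196 * f n ^ 6 * r n ^ 3 and r (n+1) = 15/7 * r n, which with f 0 = 3 and r 0 = 1/3
  is solved by the stated product of powers of 2, 3, 5, 7.
*)

theory Submission
  imports Defs
begin

lemma edge_reach_refl [simp]: "edge_reach T x x"
  by (simp add: edge_reach_def)

lemma edge_reach_edge: "{x, y} \<in> T \<Longrightarrow> edge_reach T x y"
  unfolding edge_reach_def by (rule r_into_rtranclp) auto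

lemma edge_reach_trans: "edge_reach T x y \<Longrightarrow> edge_reach T y z \<Longrightarrow> edge_reach T x z"
  unfolding edge_reach_def by (rule rtranclp_trans)

lemma edge_reach_sym: "edge_reach T x y \<Longrightarrow> edge_reach T y x"
  unfolding edge_reach_def
proof (induction rule: rtranclp_induct)
  case (step y z)
  then have "(\<lambda>x y. \<exists>e\<in>T. e = {x, y}) z y" by (auto simp: insert_commute)
  then show ?case using step(3) by (rule converse_rtranclp_into_rtranclp)
qed simp

lemma edge_reach_commute: "edge_reach T x y \<longleftrightarrow> edge_reach T y x"
  using edge_reach_sym[of T x y] edge_reach_sym[of T y x] by blast

lemma edge_reach_mono: "edge_reach T x y \<Longrightarrow> T \<subseteq> T' \<Longrightarrow> edge_reach T' x y"
  unfolding edge_reach_def by (erule rtranclp_mono[THEN predicate2D, rotated]) auto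

lemma edge_reach_in_Union:
  "edge_reach T x y \<Longrightarrow> x \<noteq> y \<Longrightarrow> x \<in> \<Union>T \<and> y \<in> \<Union>T"
  unfolding edge_reach_def
proof (induction rule: rtranclp_induct)
  case (step y z)
  then show ?case by (cases "x = y") auto
qed simp

lemma edge_reach_empty [simp]: "edge_reach {} x y \<longleftrightarrow> x = y"
  using edge_reach_in_Union by fastforce

lemma rtranclp_sup_sym_pair:
  "(\<lambda>a b. R a b \<or> (a = x \<and> b = y) \<or> (a = y \<and> b = x))\<^sup>*\<^sup>* a b \<longleftrightarrow>
   R\<^sup>*\<^sup>* a b \<or> (R\<^sup>*\<^sup>* a x \<and> R\<^sup>*\<^sup>* y b) \<or> (R\<^sup>*\<^sup>* a y \<and> R\<^sup>*\<^sup>* x b)"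
  (is "?Q\<^sup>*\<^sup>* a b \<longleftrightarrow> _")
proof
  assume "?Q\<^sup>*\<^sup>* a b"
  then show "R\<^sup>*\<^sup>* a b \<or> (R\<^sup>*\<^sup>* a x \<and> R\<^sup>*\<^sup>* y b) \<or> (R\<^sup>*\<^sup>* a y \<and> R\<^sup>*\<^sup>* x b)"
  proof (induction rule: rtranclp_induct)
    case (step b c)
    from step(2) show ?case
    proof (elim disjE)
      assume "R b c"
      then show ?thesis using step(3) by (meson rtranclp.rtrancl_into_rtrancl)
    qed (use step(3) in auto)
  qed simp
next
  have "R\<^sup>*\<^sup>* u v \<Longrightarrow> ?Q\<^sup>*\<^sup>* u v" for u v
    by (erule rtranclp_mono[THEN predicate2D, rotated]) auto
  moreover have "?Q\<^sup>*\<^sup>* x y" "?Q\<^sup>*\<^sup>* y x" by (auto intro: r_into_rtranclp)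
  ultimately show "?Q\<^sup>*\<^sup>* a b" if "R\<^sup>*\<^sup>* a b \<or> (R\<^sup>*\<^sup>* a x \<and> R\<^sup>*\<^sup>* y b) \<or> (R\<^sup>*\<^sup>* a y \<and> R\<^sup>*\<^sup>* x b)"
    using that by (meson rtranclp_trans)
qed

lemma edge_reach_insert:
  "edge_reach (insert {x, y} T) u v \<longleftrightarrow>
     edge_reach T u v \<or> (edge_reach T u x \<and> edge_reach T y v) \<or> (edge_reach T u y \<and> edge_reach T x v)"
proof -
  have "(\<lambda>a b. \<exists>e\<in>insert {x, y} T. e = {a, b}) =
        (\<lambda>a b. (\<exists>e\<in>T. e = {a, b}) \<or> (a = x \<and> b = y) \<or> (a = y \<and> b = x))"
    by (auto simp: doubleton_eq_iff)
  then show ?thesis unfolding edge_reach_def by (simp add: rtranclp_sup_sym_pair)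
qed

lemma edge_reach_Diff_edge:
  assumes "edge_reach T a b" "e = {x, y}"
  shows "edge_reach (T - {e}) a b \<or> (edge_reach (T - {e}) a x \<and> edge_reach (T - {e}) y b)
           \<or> (edge_reach (T - {e}) a y \<and> edge_reach (T - {e}) x b)"
proof -
  have "edge_reach (insert {x, y} (T - {e})) a b"
    using assms by (auto elim: edge_reach_mono)
  then show ?thesis by (simp add: edge_reach_insert)
qed

lemma edge_reach_Un:
  "edge_reach (A \<union> C) a b \<longleftrightarrow> (\<lambda>u v. edge_reach A u v \<or> edge_reach C u v)\<^sup>*\<^sup>* a b"
proof
  assume "edge_reach (A \<union> C) a b"
  then show "(\<lambda>u v. edge_reach A u v \<or> edge_reach C u v)\<^sup>*\<^sup>* a b"
    unfolding edge_reach_def[of "A \<union> C"]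
    by (rule rtranclp_mono[THEN predicate2D, rotated]) (auto intro: edge_reach_edge)
next
  assume "(\<lambda>u v. edge_reach A u v \<or> edge_reach C u v)\<^sup>*\<^sup>* a b"
  then show "edge_reach (A \<union> C) a b"
    by (induction rule: rtranclp_induct)
      (simp, meson Un_upper1 Un_upper2 edge_reach_mono edge_reach_trans)
qed

lemma edge_reach_crossing_edge:
  assumes "finite T" "edge_reach T u v" "u \<noteq> v"
  shows "\<exists>e\<in>T. \<exists>x y. e = {x, y} \<and> edge_reach (T - {e}) u x \<and> edge_reach (T - {e}) y v"
  using assms
proof (induction "card T" arbitrary: T rule: less_induct)
  case less
  show ?case
  proof (cases "\<exists>e\<in>T. edge_reach (T - {e}) u v")
    case True
    then obtain e where e: "e \<in> T" "edge_reach (T - {e}) u v" by blast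
    have "card (T - {e}) < card T" using e less.prems(1) by (meson card_Diff1_less)
    then have "\<exists>e'\<in>T - {e}. \<exists>x y. e' = {x, y} \<and> edge_reach (T - {e} - {e'}) u x
                 \<and> edge_reach (T - {e} - {e'}) y v"
      using less.hyps[of "T - {e}"] less.prems(1,3) e(2) by auto
    then obtain e' x y where "e' \<in> T - {e}" "e' = {x, y}"
        "edge_reach (T - {e} - {e'}) u x" "edge_reach (T - {e} - {e'}) y v"
      by blast
    then show ?thesis by (intro bexI[of _ e'] exI[of _ x] exI[of _ y]) (auto elim: edge_reach_mono)
  next
    case False
    obtain w where "(\<lambda>x y. \<exists>e\<in>T. e = {x, y}) u w"
    proof -
      have "(\<lambda>x y. \<exists>e\<in>T. e = {x, y})\<^sup>*\<^sup>* u v" using less.prems(2) by (simp add: edge_reach_def)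
      then show ?thesis using less.prems(3) that by (cases rule: converse_rtranclpE) auto
    qed
    then obtain e where e: "e \<in> T" "e = {u, w}" by blast
    have "\<not> edge_reach (T - {e}) u v" using False e(1) by blast
    then have wv: "edge_reach (T - {e}) w v"
      using edge_reach_Diff_edge[OF less.prems(2) e(2)] by blast
    show ?thesis
    proof (intro bexI[OF _ e(1)] exI conjI)
      show "e = {u, w}" by (rule e(2))
    qed (simp_all add: wv)
  qed
qed

definition forest :: "'a set set \<Rightarrow> bool" where
  "forest T \<longleftrightarrow> (\<forall>e \<in> T. \<forall>x y. e = {x, y} \<longrightarrow> \<not> edge_reach (T - {e}) x y)"

lemma forest_empty [simp]: "forest {}"
  by (simp add: forest_def)

lemma forest_subset: "forest T' \<Longrightarrow> T \<subseteq> T' \<Longrightarrow> forest T"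
  unfolding forest_def by (meson Diff_mono edge_reach_mono order_refl subsetD)

lemma mem_of_card_le_3:
  assumes "finite S" "card S \<le> 3" "a \<in> S" "b \<in> S" "c \<in> S" "a \<noteq> b" "a \<noteq> c" "b \<noteq> c" "z \<in> S"
  shows "z = a \<or> z = b \<or> z = c"
proof -
  have "{a, b, c} \<subseteq> S" "card {a, b, c} = 3" using assms by auto
  then have "S = {a, b, c}" using assms(1,2) by (metis card_seteq)
  then show ?thesis using assms(9) by auto
qed

text \<open>
  Gluing two forests along at most three shared vertices. Here \<open>A\<close> is the first forest with an
  edge \<open>{x, y}\<close> removed. A walk from \<open>x\<close> in \<open>A \<union> C\<close> is classified by how often it has switched
  forests at a shared vertex; \<open>walk_phase\<close> lists the possible histories. A fourth switch would
  need a fourth shared vertex or two shared vertices joined in both forests, so \<open>y\<close> is never reached.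
\<close>

locale forest_glue =
  fixes A C :: "'a set set" and S :: "'a set" and x y :: 'a
  assumes finite_shared: "finite S" and card_shared: "card S \<le> 3"
    and shared: "\<Union>(insert {x, y} A) \<inter> \<Union>C \<subseteq> S"
    and unique: "\<And>u v. u \<in> S \<Longrightarrow> v \<in> S \<Longrightarrow> edge_reach (insert {x, y} A) u v \<Longrightarrow>
                        edge_reach C u v \<Longrightarrow> u = v"
    and separated: "\<not> edge_reach A x y"
begin

definition walk_phase :: "'a \<Rightarrow> bool" where
  "walk_phase z \<longleftrightarrow>
     edge_reach A x z
   \<or> (\<exists>s1\<in>S. edge_reach A x s1 \<and> edge_reach C s1 z)
   \<or> (\<exists>s1\<in>S. \<exists>s2\<in>S. edge_reach A x s1 \<and> edge_reach C s1 s2 \<and> \<not> edge_reach A x s2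
        \<and> \<not> edge_reach A y s2 \<and> edge_reach A s2 z)
   \<or> (\<exists>s1\<in>S. \<exists>s2\<in>S. \<exists>s3\<in>S. edge_reach A x s1 \<and> edge_reach C s1 s2 \<and> \<not> edge_reach A x s2
        \<and> \<not> edge_reach A y s2 \<and> edge_reach A s2 s3 \<and> s3 \<noteq> s2 \<and> edge_reach C s3 z)"

lemma in_shared: "u \<in> \<Union>A \<or> u = x \<or> u = y \<Longrightarrow> u \<in> \<Union>C \<Longrightarrow> u \<in> S"
  using shared by auto

lemma joined_via_x_y: "edge_reach A u x \<Longrightarrow> edge_reach A y v \<Longrightarrow> edge_reach (insert {x, y} A) u v"
  by (simp add: edge_reach_insert)

lemma three_switches_distinct:
  assumes "edge_reach A x s1" "\<not> edge_reach A x s2" "edge_reach A s2 s3"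
  shows "s1 \<noteq> s2" "s1 \<noteq> s3"
proof -
  show "s1 \<noteq> s2" using assms(1,2) by auto
  show "s1 \<noteq> s3"
  proof
    assume "s1 = s3"
    then have "edge_reach A x s3" using assms(1) by simp
    then show False using edge_reach_trans[OF _ edge_reach_sym[OF assms(3)]] assms(2) by blast
  qed
qed

lemma walk_phase_A_step:
  assumes phase: "walk_phase z" and step: "edge_reach A z z'" "z \<noteq> z'"
  shows "walk_phase z'"
  using phase[unfolded walk_phase_def]
proof (elim disjE bexE conjE)
  assume "edge_reach A x z"
  then show ?thesis using step unfolding walk_phase_def by (blast intro: edge_reach_trans)
next
  fix s1 assume s1: "s1 \<in> S" "edge_reach A x s1" "edge_reach C s1 z"
  show ?thesis
  proof (cases "z = s1")
    case False
    then have zS: "z \<in> S" using edge_reach_in_Union[OF step] edge_reach_in_Union[OF s1(3)] in_shared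
      by blast
    consider "edge_reach A x z" | "edge_reach A y z" | "\<not> edge_reach A x z \<and> \<not> edge_reach A y z"
      by blast
    then show ?thesis
    proof cases
      case 2
      have "edge_reach (insert {x, y} A) s1 z"
        using joined_via_x_y[OF edge_reach_sym[OF s1(2)] 2] .
      then show ?thesis using unique[OF s1(1) zS _ s1(3)] False by blast
    qed (use s1 zS step in \<open>unfold walk_phase_def; blast intro: edge_reach_trans\<close>)+
  qed (use s1 step in \<open>unfold walk_phase_def; blast intro: edge_reach_trans\<close>)
next
  fix s1 s2 s3
  assume s: "s1 \<in> S" "s2 \<in> S" "s3 \<in> S" "edge_reach A x s1" "edge_reach C s1 s2"
    "\<not> edge_reach A x s2" "\<not> edge_reach A y s2" "edge_reach A s2 s3" "s3 \<noteq> s2" "edge_reach C s3 z"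
  show ?thesis
  proof (cases "z = s3")
    case False
    have zS: "z \<in> S" using edge_reach_in_Union[OF step] edge_reach_in_Union[OF s(10)] in_shared False
      by blast
    have "z = s1 \<or> z = s2"
      using mem_of_card_le_3[OF finite_shared card_shared s(1,2,3)
          three_switches_distinct[OF s(4,6,8)] s(9)[symmetric] zS] False by blast
    then have "edge_reach C s2 s3" using s by (metis edge_reach_sym edge_reach_trans)
    moreover have "edge_reach (insert {x, y} A) s2 s3" using s(8) by (auto elim: edge_reach_mono)
    ultimately show ?thesis using unique[OF s(2,3)] s(9) by blast
  qed (use s step in \<open>unfold walk_phase_def; blast intro: edge_reach_trans\<close>)
next
  fix s1 s2
  assume "s1 \<in> S" "s2 \<in> S" "edge_reach A x s1" "edge_reach C s1 s2"
    "\<not> edge_reach A x s2" "\<not> edge_reach A y s2" "edge_reach A s2 z"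
  then show ?thesis using step unfolding walk_phase_def by (blast intro: edge_reach_trans)
qed

lemma walk_phase_C_step:
  assumes phase: "walk_phase z" and step: "edge_reach C z z'" "z \<noteq> z'"
  shows "walk_phase z'"
  using phase[unfolded walk_phase_def]
proof (elim disjE bexE conjE)
  assume xz: "edge_reach A x z"
  have "z \<in> \<Union>A \<or> z = x" using edge_reach_in_Union[OF xz] by blast
  then have "z \<in> S" using in_shared edge_reach_in_Union[OF step(1,2)] by blast
  then show ?thesis using xz step by (auto simp: walk_phase_def)
next
  fix s1 s2
  assume s: "s1 \<in> S" "s2 \<in> S" "edge_reach A x s1" "edge_reach C s1 s2"
    "\<not> edge_reach A x s2" "\<not> edge_reach A y s2" "edge_reach A s2 z"
  show ?thesis
  proof (cases "z = s2")
    case False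
    then have "z \<in> S"
      using edge_reach_in_Union[OF s(7)] edge_reach_in_Union[OF step] in_shared by blast
    then show ?thesis using s step False unfolding walk_phase_def by blast
  qed (use s step in \<open>unfold walk_phase_def; blast intro: edge_reach_trans\<close>)
next
  fix s1 assume "s1 \<in> S" "edge_reach A x s1" "edge_reach C s1 z"
  then show ?thesis using step unfolding walk_phase_def by (blast intro: edge_reach_trans)
next
  fix s1 s2 s3
  assume "s1 \<in> S" "s2 \<in> S" "s3 \<in> S" "edge_reach A x s1" "edge_reach C s1 s2"
    "\<not> edge_reach A x s2" "\<not> edge_reach A y s2" "edge_reach A s2 s3" "s3 \<noteq> s2" "edge_reach C s3 z"
  then show ?thesis using step unfolding walk_phase_def by (blast intro: edge_reach_trans)
qed

lemma walk_phase_end: "\<not> walk_phase y"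
  unfolding walk_phase_def
proof (intro notI, elim disjE bexE conjE)
  assume "edge_reach A x y" then show False using separated by blast
next
  fix s1 assume s1: "s1 \<in> S" "edge_reach A x s1" "edge_reach C s1 y"
  have "s1 \<noteq> y" using s1 separated by blast
  then have "y \<in> S" using edge_reach_in_Union[OF s1(3)] in_shared by blast
  moreover have "edge_reach (insert {x, y} A) s1 y"
    using joined_via_x_y[OF edge_reach_sym[OF s1(2)] edge_reach_refl] .
  ultimately show False using unique[OF s1(1)] s1(3) \<open>s1 \<noteq> y\<close> by blast
next
  fix s1 s2
  assume "\<not> edge_reach A y s2" "edge_reach A s2 y"
  then show False using edge_reach_sym[of A s2 y] by blast
next
  fix s1 s2 s3
  assume s: "s1 \<in> S" "s2 \<in> S" "s3 \<in> S" "edge_reach A x s1" "edge_reach C s1 s2"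
    "\<not> edge_reach A x s2" "\<not> edge_reach A y s2" "edge_reach A s2 s3" "s3 \<noteq> s2" "edge_reach C s3 y"
  show False
  proof (cases "y = s3")
    case True
    then show False using s(7,8) edge_reach_sym[of A s2 y] by blast
  next
    case False
    then have "y \<in> S" using edge_reach_in_Union[OF s(10)] in_shared s(9) by blast
    then have "y = s1 \<or> y = s2"
      using mem_of_card_le_3[OF finite_shared card_shared s(1,2,3)
          three_switches_distinct[OF s(4,6,8)] s(9)[symmetric]] False by blast
    then show False using s separated by auto
  qed
qed

theorem separated_Un: "\<not> edge_reach (A \<union> C) x y"
proof
  assume "edge_reach (A \<union> C) x y"
  then have "(\<lambda>u v. edge_reach A u v \<or> edge_reach C u v)\<^sup>*\<^sup>* x y" by (simp add: edge_reach_Un)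
  moreover have "walk_phase z" if "(\<lambda>u v. edge_reach A u v \<or> edge_reach C u v)\<^sup>*\<^sup>* x z" for z
    using that
  proof (induction rule: rtranclp_induct)
    case (step z z')
    then show ?case
      by (cases "z = z'") (auto intro: walk_phase_A_step walk_phase_C_step)
  qed (simp add: walk_phase_def)
  ultimately show False using walk_phase_end by blast
qed

end

lemma forest_Un_Diff_edge:
  assumes A: "forest A" and C: "forest C" and AC: "\<Union>A \<inter> \<Union>C \<subseteq> S" "finite S" "card S \<le> 3"
    and unique: "\<And>u v. u \<in> S \<Longrightarrow> v \<in> S \<Longrightarrow> edge_reach A u v \<Longrightarrow> edge_reach C u v \<Longrightarrow> u = v"
    and e: "e \<in> A" "e = {x, y}"
  shows "\<not> edge_reach ((A \<union> C) - {e}) x y"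
proof -
  have Ae: "insert {x, y} (A - {e}) = A" using e by auto
  have "e \<notin> C"
  proof
    assume "e \<in> C"
    then have "x = y" using unique AC e by (auto intro!: edge_reach_edge)
    then show False using A e unfolding forest_def by auto
  qed
  interpret forest_glue "A - {e}" C S x y
    by unfold_locales (use AC Ae unique A e in \<open>auto simp: forest_def\<close>)
  have "(A \<union> C) - {e} = (A - {e}) \<union> C" using \<open>e \<notin> C\<close> by auto
  then show ?thesis using separated_Un by simp
qed

lemma forest_Un:
  assumes "forest A" "forest C" "\<Union>A \<inter> \<Union>C \<subseteq> S" "finite S" "card S \<le> 3"
    and unique: "\<And>u v. u \<in> S \<Longrightarrow> v \<in> S \<Longrightarrow> edge_reach A u v \<Longrightarrow> edge_reach C u v \<Longrightarrow> u = v"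
  shows "forest (A \<union> C)"
  unfolding forest_def
proof (intro ballI allI impI)
  fix e x y assume e: "e \<in> A \<union> C" "e = {x, y}"
  show "\<not> edge_reach (A \<union> C - {e}) x y"
  proof (cases "e \<in> A")
    case True
    then show ?thesis using forest_Un_Diff_edge[OF assms] e(2) by blast
  next
    case False
    have "\<Union>C \<inter> \<Union>A \<subseteq> S" using assms(3) by blast
    then have "\<not> edge_reach (C \<union> A - {e}) x y"
      using forest_Un_Diff_edge[OF assms(2,1) _ assms(4,5)] unique False e by blast
    then show ?thesis by (simp add: Un_commute)
  qed
qed

lemma forest_Un_unique:
  assumes "forest (A \<union> C)" "A \<inter> C = {}" "finite A" "edge_reach A u v" "edge_reach C u v"
  shows "u = v"
proof (rule ccontr)
  assume "u \<noteq> v"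
  then obtain e x y where e: "e \<in> A" "e = {x, y}"
    "edge_reach (A - {e}) u x" "edge_reach (A - {e}) y v"
    using edge_reach_crossing_edge[OF assms(3,4)] by blast
  have "e \<notin> C" using e assms(2) by blast
  then have "edge_reach (A \<union> C - {e}) u x" "edge_reach (A \<union> C - {e}) y v"
      "edge_reach (A \<union> C - {e}) u v"
    using e assms(5) by (auto elim: edge_reach_mono)
  then have "edge_reach (A \<union> C - {e}) x y" by (meson edge_reach_sym edge_reach_trans)
  then show False using assms(1) e unfolding forest_def by blast
qed

section \<open>Edge sets glued from pieces meeting only in boundary vertices\<close>

locale glued_pieces =
  fixes I :: "'i set" and T :: "'i \<Rightarrow> 'a set set" and V B :: "'i \<Rightarrow> 'a set"
  assumes edges_in_piece: "\<And>i. i \<in> I \<Longrightarrow> \<Union>(T i) \<subseteq> V i"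
    and boundary_in_piece: "\<And>i. i \<in> I \<Longrightarrow> B i \<subseteq> V i"
    and pieces_meet_in_boundary: "\<And>i j. i \<in> I \<Longrightarrow> j \<in> I \<Longrightarrow> i \<noteq> j \<Longrightarrow> V i \<inter> V j \<subseteq> B i \<inter> B j"
begin

definition boundary_step :: "'a \<Rightarrow> 'a \<Rightarrow> bool" where
  "boundary_step u v \<longleftrightarrow> (\<exists>i\<in>I. u \<in> B i \<and> v \<in> B i \<and> edge_reach (T i) u v)"

lemma reach_in_piece: "i \<in> I \<Longrightarrow> edge_reach (T i) u v \<Longrightarrow> u \<noteq> v \<Longrightarrow> v \<in> V i"
  using edge_reach_in_Union[of "T i" u v] edges_in_piece[of i] by blast

lemma boundary_of_piece:
  assumes "j \<in> I" "v \<in> V j" "k \<in> I" "v \<in> B k"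
  shows "v \<in> B j"
proof (cases "k = j")
  case False
  then show ?thesis
    using pieces_meet_in_boundary[OF assms(3,1) False] boundary_in_piece[OF assms(3)] assms(2,4)
    by blast
qed (use assms(4) in simp)

lemma edge_reach_UN_boundary_walk:
  assumes a: "a \<in> (\<Union>i\<in>I. B i)" and r: "edge_reach (\<Union>i\<in>I. T i) a y"
  shows "\<exists>c\<in>\<Union>i\<in>I. B i. boundary_step\<^sup>*\<^sup>* a c \<and> (y = c \<or> (\<exists>i\<in>I. c \<in> B i \<and> edge_reach (T i) c y))"
  using r[unfolded edge_reach_def]
proof (induction rule: rtranclp_induct)
  case base
  show ?case using a by (intro bexI[of _ a]) auto
next
  case (step y z)
  from step(2) obtain j where j: "j \<in> I" "{y, z} \<in> T j" by auto
  have yz: "y \<in> V j" "edge_reach (T j) y z" using j edges_in_piece edge_reach_edge by auto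
  have restart: ?case if y: "y \<in> (\<Union>i\<in>I. B i)" and ay: "boundary_step\<^sup>*\<^sup>* a y"
  proof -
    from y obtain k where "k \<in> I" "y \<in> B k" by blast
    then have "y \<in> B j" using boundary_of_piece[OF j(1) yz(1)] by blast
    then show ?case using y ay yz(2) j(1) by (intro bexI[of _ y]) auto
  qed
  from step(3) obtain c where c: "c \<in> (\<Union>i\<in>I. B i)" "boundary_step\<^sup>*\<^sup>* a c"
    "y = c \<or> (\<exists>i\<in>I. c \<in> B i \<and> edge_reach (T i) c y)"
    by blast
  from c(3) show ?case
  proof (elim disjE bexE conjE)
    assume "y = c"
    then show ?case using restart c(1,2) by simp
  next
    fix i assume i: "i \<in> I" "c \<in> B i" "edge_reach (T i) c y"
    consider "y = c" | "i = j" | "y \<noteq> c" "i \<noteq> j" by blast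
    then show ?case
    proof cases
      case 1
      then show ?thesis using restart c(1,2) by simp
    next
      case 2
      then have "edge_reach (T i) c z" using edge_reach_trans[OF i(3)] yz(2) by simp
      then show ?thesis using c(1,2) i(1,2) by (intro bexI[of _ c]) auto
    next
      case 3
      then have yB: "y \<in> B i \<inter> B j"
        using reach_in_piece[OF i(1,3)] pieces_meet_in_boundary[OF i(1) j(1)] yz(1) by blast
      then have "boundary_step c y" using i unfolding boundary_step_def by blast
      with c(2) have "boundary_step\<^sup>*\<^sup>* a y" by (rule rtranclp.rtrancl_into_rtrancl)
      then show ?thesis using restart yB i(1) by blast
    qed
  qed
qed

lemma edge_reach_UN_iff_boundary_steps:
  assumes a: "a \<in> (\<Union>i\<in>I. B i)" and b: "b \<in> (\<Union>i\<in>I. B i)"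
  shows "edge_reach (\<Union>i\<in>I. T i) a b \<longleftrightarrow> boundary_step\<^sup>*\<^sup>* a b"
proof
  assume "edge_reach (\<Union>i\<in>I. T i) a b"
  from edge_reach_UN_boundary_walk[OF a this] obtain c where c: "boundary_step\<^sup>*\<^sup>* a c"
    "b = c \<or> (\<exists>i\<in>I. c \<in> B i \<and> edge_reach (T i) c b)" by blast
  from c(2) show "boundary_step\<^sup>*\<^sup>* a b"
  proof (elim disjE bexE conjE)
    fix i assume i: "i \<in> I" "c \<in> B i" "edge_reach (T i) c b"
    have "b \<in> B i"
      using b boundary_of_piece[OF i(1)] reach_in_piece[OF i(1,3)] i(2) by (cases "b = c") auto
    then have "boundary_step c b" using i unfolding boundary_step_def by blast
    then show ?thesis by (rule rtranclp.rtrancl_into_rtrancl[OF c(1)])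
  qed (use c in simp)
next
  assume "boundary_step\<^sup>*\<^sup>* a b"
  then show "edge_reach (\<Union>i\<in>I. T i) a b"
  proof (induction rule: rtranclp_induct)
    case (step y z)
    then obtain i where "i \<in> I" "edge_reach (T i) y z" unfolding boundary_step_def by blast
    then have "edge_reach (\<Union>i\<in>I. T i) y z" by (auto elim: edge_reach_mono)
    then show ?case using step(3) edge_reach_trans by metis
  qed simp
qed

lemma edge_reach_UN_leave_piece:
  assumes i: "i \<in> I" and x: "x \<in> V i" and r: "edge_reach (\<Union>i\<in>I. T i) x y"
  shows "edge_reach (T i) x y \<or> (\<exists>b\<in>B i. edge_reach (T i) x b \<and> edge_reach (\<Union>j\<in>I. T j) b y)"
  using r[unfolded edge_reach_def]
proof (induction rule: rtranclp_induct)
  case (step y z)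
  from step(2) obtain j where j: "j \<in> I" "{y, z} \<in> T j" by auto
  have yz: "y \<in> V j" "edge_reach (T j) y z" using j edges_in_piece edge_reach_edge by auto
  have yzU: "edge_reach (\<Union>j\<in>I. T j) y z" using j edge_reach_edge[of y z] by (auto elim: edge_reach_mono)
  from step(3) show ?case
  proof
    assume h: "edge_reach (T i) x y"
    show ?thesis
    proof (cases "j = i")
      case True then show ?thesis using h yz(2) edge_reach_trans by metis
    next
      case False
      have "y \<in> V i" using x reach_in_piece[OF i h] by (cases "x = y") auto
      then have "y \<in> B i" using pieces_meet_in_boundary[OF i j(1)] False yz(1) by blast
      then show ?thesis using h yzU by blast
    qed
  next
    assume "\<exists>b\<in>B i. edge_reach (T i) x b \<and> edge_reach (\<Union>j\<in>I. T j) b y"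
    then show ?thesis using yzU edge_reach_trans by metis
  qed
qed simp

end

definition edge_image :: "('a \<Rightarrow> 'b) \<Rightarrow> 'a set set \<Rightarrow> 'b set set" where
  "edge_image f T = (\<lambda>e. f ` e) ` T"

lemma Union_edge_image: "\<Union>(edge_image f T) = f ` \<Union>T"
  unfolding edge_image_def by auto

lemma inj_image_eq_doubleton: "inj f \<Longrightarrow> f ` e = {f u, f v} \<Longrightarrow> e = {u, v}"
  by (metis image_empty image_insert inj_image_eq_iff)

lemma edge_reach_edge_image_imp: "edge_reach T x y \<Longrightarrow> edge_reach (edge_image f T) (f x) (f y)"
  unfolding edge_reach_def
proof (induction rule: rtranclp_induct)
  case (step y z)
  then have "f ` {y, z} \<in> edge_image f T" unfolding edge_image_def by blast
  then have "\<exists>e\<in>edge_image f T. e = {f y, f z}" by (intro bexI[of _ "f ` {y, z}"]) auto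
  then show ?case using step(3) by (simp add: rtranclp.rtrancl_into_rtrancl)
qed simp

lemma edge_reach_edge_image_inv:
  assumes inj: "inj f" and r: "edge_reach (edge_image f T) (f x) b"
  shows "\<exists>y. b = f y \<and> edge_reach T x y"
  using r[unfolded edge_reach_def]
proof (induction rule: rtranclp_induct)
  case base
  show ?case by (intro exI[of _ x]) simp
next
  case (step b c)
  then obtain y where y: "b = f y" "edge_reach T x y" by blast
  from step(2) obtain e where e: "e \<in> T" "f ` e = {b, c}" unfolding edge_image_def by auto
  have "c \<in> f ` e" using e(2) by simp
  then obtain v where v: "c = f v" by blast
  then have "e = {y, v}" using e(2) y(1) inj_image_eq_doubleton[OF inj] by simp
  then have "edge_reach T y v" using e(1) edge_reach_edge by metis
  then have "edge_reach T x v" using y(2) edge_reach_trans by metis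
  then show ?case using v by blast
qed

lemma edge_reach_edge_image:
  "inj f \<Longrightarrow> edge_reach (edge_image f T) (f x) (f y) \<longleftrightarrow> edge_reach T x y"
  using edge_reach_edge_image_imp edge_reach_edge_image_inv by (metis inj_eq)

lemma edge_image_Diff: "inj f \<Longrightarrow> edge_image f T - {f ` e} = edge_image f (T - {e})"
  unfolding edge_image_def by (auto simp: inj_image_eq_iff)

lemma forest_edge_image:
  assumes inj: "inj f"
  shows "forest (edge_image f T) \<longleftrightarrow> forest T"
proof
  assume A: "forest (edge_image f T)"
  show "forest T" unfolding forest_def
  proof (intro ballI allI impI)
    fix e x y assume e: "e \<in> T" "e = {x, y}"
    then have "f ` e \<in> edge_image f T" "f ` e = {f x, f y}"
      unfolding edge_image_def by (auto intro!: image_eqI[of _ _ e])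
    then have "\<not> edge_reach (edge_image f T - {f ` e}) (f x) (f y)" using A unfolding forest_def by blast
    then show "\<not> edge_reach (T - {e}) x y" by (simp add: edge_image_Diff edge_reach_edge_image inj)
  qed
next
  assume A: "forest T"
  show "forest (edge_image f T)" unfolding forest_def
  proof (intro ballI allI impI)
    fix e' X Y assume e': "e' \<in> edge_image f T" "e' = {X, Y}"
    then obtain e where e: "e \<in> T" "e' = f ` e" unfolding edge_image_def by auto
    then obtain x y where xy: "X = f x" "Y = f y" using e' by (metis imageE insertI1 insert_commute)
    then have "e = {x, y}" using e e' inj_image_eq_doubleton[OF inj] by simp
    then have "\<not> edge_reach (T - {e}) x y" using A e unfolding forest_def by blast
    then show "\<not> edge_reach (edge_image f T - {e'}) X Y"
      by (simp add: e(2) xy edge_image_Diff edge_reach_edge_image inj)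
  qed
qed

lemma inj_edge_image: "inj f \<Longrightarrow> inj (edge_image f)"
  unfolding edge_image_def by (simp add: inj_image_eq_iff inj_def)

lemma edge_image_subset_iff: "inj f \<Longrightarrow> edge_image f T \<subseteq> edge_image f E \<longleftrightarrow> T \<subseteq> E"
  unfolding edge_image_def by (simp add: inj_image_subset_iff inj_image_eq_iff inj_def)

lemma subset_edge_imageE:
  assumes "T' \<subseteq> edge_image f E"
  obtains T where "T \<subseteq> E" "T' = edge_image f T"
proof
  show "T' = edge_image f {e\<in>E. f ` e \<in> T'}" using assms unfolding edge_image_def by auto
qed auto

section \<open>Rooted forests and connection types of three terminals\<close>

definition rooted_forest :: "'a set \<Rightarrow> 'a set set \<Rightarrow> 'a set \<Rightarrow> 'a set set \<Rightarrow> bool" where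
  "rooted_forest V E B T \<longleftrightarrow> T \<subseteq> E \<and> forest T \<and> (\<forall>x\<in>V. \<exists>b\<in>B. edge_reach T x b)"

text \<open>
  The five ways three terminals can be connected, numbered as follows: \<open>0\<close> all connected,
  \<open>1\<close> only terminals 1 and 2, \<open>2\<close> only 0 and 2, \<open>3\<close> only 0 and 1, \<open>4\<close> none.
\<close>

definition type_links :: "nat \<Rightarrow> nat \<Rightarrow> nat \<Rightarrow> bool" where
  "type_links t i j \<longleftrightarrow> i = j \<or> t = 0 \<or> ({i, j} = {0, 1} \<and> t = 3) \<or> ({i, j} = {1, 2} \<and> t = 1)
     \<or> ({i, j} = {0, 2} \<and> t = 2)"

definition conn_type :: "(nat \<Rightarrow> 'a) \<Rightarrow> nat \<Rightarrow> 'a set set \<Rightarrow> bool" where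
  "conn_type q t T \<longleftrightarrow> (\<forall>i<3. \<forall>j<3. edge_reach T (q i) (q j) \<longleftrightarrow> type_links t i j)"

lemma all_less_3: "(\<forall>i<(3::nat). P i) \<longleftrightarrow> P 0 \<and> P 1 \<and> P 2"
  by (auto simp: numeral_3_eq_3 numeral_2_eq_2 less_Suc_eq)

lemma type_links_simps:
  "type_links t i i"
  "type_links t 0 1 \<longleftrightarrow> t = 0 \<or> t = 3" "type_links t 1 0 \<longleftrightarrow> t = 0 \<or> t = 3"
  "type_links t 1 2 \<longleftrightarrow> t = 0 \<or> t = 1" "type_links t 2 1 \<longleftrightarrow> t = 0 \<or> t = 1"
  "type_links t 0 2 \<longleftrightarrow> t = 0 \<or> t = 2" "type_links t 2 0 \<longleftrightarrow> t = 0 \<or> t = 2"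
  unfolding type_links_def by (auto simp: doubleton_eq_iff)

lemma conn_type_iff:
  "conn_type q t T \<longleftrightarrow>
     (edge_reach T (q 0) (q 1) \<longleftrightarrow> t = 0 \<or> t = 3) \<and> (edge_reach T (q 1) (q 2) \<longleftrightarrow> t = 0 \<or> t = 1)
   \<and> (edge_reach T (q 0) (q 2) \<longleftrightarrow> t = 0 \<or> t = 2)"
proof -
  have "edge_reach T (q 1) (q 0) \<longleftrightarrow> edge_reach T (q 0) (q 1)"
    "edge_reach T (q 2) (q 1) \<longleftrightarrow> edge_reach T (q 1) (q 2)"
    "edge_reach T (q 2) (q 0) \<longleftrightarrow> edge_reach T (q 0) (q 2)"
    by (rule edge_reach_commute)+
  then show ?thesis unfolding conn_type_def all_less_3 by (simp add: type_links_simps[unfolded One_nat_def]) blast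
qed

lemma conn_type_exists: "\<exists>t<5. conn_type q t T"
proof -
  let ?a = "edge_reach T (q 0) (q 1)" and ?b = "edge_reach T (q 1) (q 2)"
    and ?c = "edge_reach T (q 0) (q 2)"
  have tr: "?a \<Longrightarrow> ?b \<Longrightarrow> ?c" "?a \<Longrightarrow> ?c \<Longrightarrow> ?b" "?b \<Longrightarrow> ?c \<Longrightarrow> ?a"
    using edge_reach_trans[of T "q 0" "q 1" "q 2"] edge_reach_trans[of T "q 1" "q 0" "q 2"]
      edge_reach_trans[of T "q 0" "q 2" "q 1"] edge_reach_commute[of T "q 0" "q 1"]
      edge_reach_commute[of T "q 1" "q 2"]
    by blast+
  let ?t = "(if ?a \<and> ?b then 0 else if ?b then 1 else if ?c then 2 else if ?a then 3 else 4) :: nat"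
  have "conn_type q ?t T"
    unfolding conn_type_iff using tr by (cases ?a; cases ?b; cases ?c) simp_all
  moreover have "?t < 5" by simp
  ultimately show ?thesis by blast
qed

lemma conn_type_unique:
  assumes "conn_type q t T" "conn_type q t' T" "t < 5" "t' < 5"
  shows "t = t'"
proof -
  have "(t = 0 \<or> t = 3 \<longleftrightarrow> t' = 0 \<or> t' = 3) \<and> (t = 0 \<or> t = 1 \<longleftrightarrow> t' = 0 \<or> t' = 1)
      \<and> (t = 0 \<or> t = 2 \<longleftrightarrow> t' = 0 \<or> t' = 2)"
    using assms(1,2) unfolding conn_type_iff by blast
  then show ?thesis using assms(3,4) by presburger
qed

lemma rooted_forest_edge_image:
  assumes "inj f"
  shows "rooted_forest (f ` V) (edge_image f E) (f ` B) (edge_image f T) \<longleftrightarrow> rooted_forest V E B T"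
proof -
  have "(\<forall>X\<in>f ` V. \<exists>Y\<in>f ` B. edge_reach (edge_image f T) X Y) \<longleftrightarrow> (\<forall>x\<in>V. \<exists>b\<in>B. edge_reach T x b)"
    using edge_reach_edge_image[OF assms] by auto
  then show ?thesis
    by (simp only: rooted_forest_def edge_image_subset_iff[OF assms] forest_edge_image[OF assms])
qed

lemma conn_type_edge_image: "inj f \<Longrightarrow> conn_type (f \<circ> q) t (edge_image f T) \<longleftrightarrow> conn_type q t T"
  unfolding conn_type_def by (simp add: edge_reach_edge_image)

lemma forest_single_edge: "x \<noteq> y \<Longrightarrow> forest {{x, y}}"
  unfolding forest_def by (auto simp: doubleton_eq_iff)

lemma forest_path_2:
  assumes "x \<noteq> y" "y \<noteq> z" "x \<noteq> z"
  shows "forest {{x, y}, {y, z}}"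
  unfolding forest_def
proof (intro ballI allI impI)
  have ne: "{x, y} \<noteq> {y, z}" using assms by (auto simp: doubleton_eq_iff)
  have removed: "{{x, y}, {y, z}} - {{x, y}} = {{y, z}}" "{{x, y}, {y, z}} - {{y, z}} = {{x, y}}"
    using ne by auto
  have apart: "\<not> edge_reach {{y, z}} x y" "\<not> edge_reach {{y, z}} y x"
    "\<not> edge_reach {{x, y}} y z" "\<not> edge_reach {{x, y}} z y"
    using assms by (simp_all add: edge_reach_insert)
  fix e u v assume e: "e \<in> {{x, y}, {y, z}}" "e = {u, v}"
  then consider "e = {x, y}" "u = x \<and> v = y \<or> u = y \<and> v = x"
    | "e = {y, z}" "u = y \<and> v = z \<or> u = z \<and> v = y"
    by (auto simp: doubleton_eq_iff)
  then show "\<not> edge_reach ({{x, y}, {y, z}} - {e}) u v"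
    by cases (use removed apart in auto)
qed

lemma not_forest_triangle:
  assumes "a \<noteq> b" "b \<noteq> c" "a \<noteq> c"
  shows "\<not> forest {{a, b}, {b, c}, {a, c}}"
proof
  assume forest: "forest {{a, b}, {b, c}, {a, c}}"
  have "{{a, b}, {b, c}, {a, c}} - {{a, c}} = {{a, b}, {b, c}}"
    using assms by (auto simp: doubleton_eq_iff)
  moreover have "edge_reach {{a, b}, {b, c}} a c" by (simp add: edge_reach_insert)
  moreover have "\<not> edge_reach ({{a, b}, {b, c}, {a, c}} - {{a, c}}) a c"
    using forest unfolding forest_def by simp
  ultimately show False by simp
qed

lemma Pow_3: "Pow {A, B, C} = {{}, {A}, {B}, {C}, {A, B}, {A, C}, {B, C}, {A, B, C}}"
  by (auto simp: Pow_insert)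

lemma card_triangle_forests:
  assumes d: "a \<noteq> b" "b \<noteq> c" "a \<noteq> c" and q: "q 0 = a" "q 1 = b" "q 2 = c" and t: "t < 5"
  shows "card {T. T \<subseteq> {{a, b}, {b, c}, {a, c}} \<and> forest T \<and> conn_type q t T} = (if t = 0 then 3 else 1)"
proof -
  have ds: "b \<noteq> a" "c \<noteq> b" "c \<noteq> a" using d by auto
  have forests: "forest {}" "forest {{a, b}}" "forest {{b, c}}" "forest {{a, c}}"
    "forest {{a, b}, {b, c}}" "forest {{a, b}, {a, c}}" "forest {{b, c}, {a, c}}"
    using forest_path_2[of b a c] forest_path_2[of b c a] forest_path_2[OF d(1,2)] d
    by (simp_all add: forest_single_edge insert_commute)
  note cycle = not_forest_triangle[OF d]
  have types:
    "conn_type q t {} \<longleftrightarrow> t = 4" "conn_type q t {{a, b}} \<longleftrightarrow> t = 3"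
    "conn_type q t {{b, c}} \<longleftrightarrow> t = 1" "conn_type q t {{a, c}} \<longleftrightarrow> t = 2"
    "conn_type q t {{a, b}, {b, c}} \<longleftrightarrow> t = 0" "conn_type q t {{a, b}, {a, c}} \<longleftrightarrow> t = 0"
    "conn_type q t {{b, c}, {a, c}} \<longleftrightarrow> t = 0"
    using t unfolding conn_type_iff q by (simp_all add: edge_reach_insert d ds, presburger+)
  have distinct_edges: "{a, c} \<notin> {{a, b}, {b, c}}" "{b, c} \<notin> {{a, b}, {a, c}}" "{a, b} \<notin> {{b, c}, {a, c}}"
    using d by (auto simp: doubleton_eq_iff)
  then have ne: "{{a, b}, {b, c}, {a, c}} \<noteq> {{a, b}, {b, c}}" "{{a, b}, {b, c}, {a, c}} \<noteq> {{a, b}, {a, c}}"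
    "{{a, b}, {b, c}, {a, c}} \<noteq> {{b, c}, {a, c}}"
    by (metis insertCI)+
  let ?R = "if t = 0 then {{{a, b}, {b, c}}, {{a, b}, {a, c}}, {{b, c}, {a, c}}} else if t = 1 then {{{b, c}}}
     else if t = 2 then {{{a, c}}} else if t = 3 then {{{a, b}}} else {{}}"
  have "{T. T \<subseteq> {{a, b}, {b, c}, {a, c}} \<and> forest T \<and> conn_type q t T} = ?R"
  proof (rule set_eqI)
    fix T
    show "T \<in> {T. T \<subseteq> {{a, b}, {b, c}, {a, c}} \<and> forest T \<and> conn_type q t T} \<longleftrightarrow> T \<in> ?R"
    proof (cases "T \<subseteq> {{a, b}, {b, c}, {a, c}}")
      case True
      then have "T \<in> Pow {{a, b}, {b, c}, {a, c}}" by simp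
      then show ?thesis unfolding Pow_3
        using t by (elim insertE emptyE) (simp_all add: forests cycle types ne doubleton_eq_iff d ds)
    next
      case False
      moreover have "X \<subseteq> {{a, b}, {b, c}, {a, c}}" if "X \<in> ?R" for X using that by (auto split: if_splits)
      ultimately show ?thesis by blast
    qed
  qed
  then show ?thesis using d by (simp add: doubleton_eq_iff)
qed

lemma card_lists_nth_in:
  "card {Ts. length Ts = length As \<and> (\<forall>k<length As. Ts ! k \<in> As ! k)} = prod_list (map card As)"
proof (induction As)
  case (Cons A As)
  let ?S = "\<lambda>As. {Ts. length Ts = length As \<and> (\<forall>k<length As. Ts ! k \<in> As ! k)}"
  have "?S (A # As) = (\<lambda>(x, xs). x # xs) ` (A \<times> ?S As)"
  proof
    show "?S (A # As) \<subseteq> (\<lambda>(x, xs). x # xs) ` (A \<times> ?S As)"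
    proof
      fix Ts assume Ts: "Ts \<in> ?S (A # As)"
      then obtain x xs where x: "Ts = x # xs" by (cases Ts) auto
      have "x \<in> A" "xs \<in> ?S As"
        using Ts nth_Cons_Suc[of x xs] Suc_less_eq unfolding x by (fastforce+)
      then show "Ts \<in> (\<lambda>(x, xs). x # xs) ` (A \<times> ?S As)" using x by auto
    qed
  qed (auto simp: nth_Cons split: nat.splits)
  moreover have "inj_on (\<lambda>(x, xs). x # xs) (A \<times> ?S As)" by (auto simp: inj_on_def)
  ultimately show ?case by (simp add: card_image card_cartesian_product Cons.IH)
qed simp

section \<open>The ten-vertex skeleton of a six-cell level\<close>

text \<open>
  Vertices \<open>0, \<dots>, 9\<close> are the corners of the six cells of side \<open>1/3\<close>, numbered row by row
  from the bottom edge (\<open>0 1 2 3\<close>, then \<open>4 5 6\<close>, \<open>7 8\<close>, \<open>9\<close>); \<open>0\<close>, \<open>3\<close>, \<open>9\<close> are the corners of the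
  whole triangle. Each cell is listed by its bottom-left, bottom-right and top corner.
\<close>

definition skel_cells :: "(nat \<times> nat \<times> nat) list" where
  "skel_cells = [(0, 1, 4), (1, 2, 5), (2, 3, 6), (4, 5, 7), (5, 6, 8), (7, 8, 9)]"

definition cell_corner :: "nat \<Rightarrow> nat \<Rightarrow> nat" where
  "cell_corner k i = (case skel_cells ! k of (a, b, c) \<Rightarrow> if i = 0 then a else if i = 1 then b else c)"

definition cell_corners :: "nat \<Rightarrow> nat set" where
  "cell_corners k = {cell_corner k 0, cell_corner k 1, cell_corner k 2}"

lemma less_3_cases: "k < (3::nat) \<longleftrightarrow> k = 0 \<or> k = 1 \<or> k = 2"
  by auto

lemma less_6_cases: "k < (6::nat) \<longleftrightarrow> k = 0 \<or> k = 1 \<or> k = 2 \<or> k = 3 \<or> k = 4 \<or> k = 5"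
  by auto

lemma less_10_cases:
  "k < (10::nat) \<longleftrightarrow> k = 0 \<or> k = 1 \<or> k = 2 \<or> k = 3 \<or> k = 4 \<or> k = 5 \<or> k = 6 \<or> k = 7 \<or> k = 8 \<or> k = 9"
  by auto

lemma length_skel_cells: "length skel_cells = 6"
  by (simp add: skel_cells_def)

lemma cell_corners_iff: "u \<in> cell_corners k \<longleftrightarrow> (\<exists>i<3. u = cell_corner k i)"
  unfolding cell_corners_def by (auto simp: less_3_cases)

lemma cell_corner_less: "k < 6 \<Longrightarrow> cell_corner k i < 10"
  unfolding less_6_cases by (auto simp: cell_corner_def skel_cells_def)

lemma cell_corner_eq_iff: "k < 6 \<Longrightarrow> i < 3 \<Longrightarrow> j < 3 \<Longrightarrow> cell_corner k i = cell_corner k j \<longleftrightarrow> i = j"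
  unfolding less_6_cases by (auto simp: cell_corner_def skel_cells_def numeral_3_eq_3 less_Suc_eq)

lemma skel_cells_nth: "k < 6 \<Longrightarrow> skel_cells ! k = (cell_corner k 0, cell_corner k 1, cell_corner k 2)"
  unfolding less_6_cases by (auto simp: cell_corner_def skel_cells_def)

lemma cell_corners_less: "k < 6 \<Longrightarrow> cell_corners k \<subseteq> {..<10}"
  unfolding cell_corners_def using cell_corner_less by auto

lemma cell_corners_values:
  "cell_corners 0 = {0, 1, 4}" "cell_corners (Suc 0) = {1, 2, 5}" "cell_corners 2 = {2, 3, 6}"
  "cell_corners 3 = {4, 5, 7}" "cell_corners 4 = {5, 6, 8}" "cell_corners 5 = {7, 8, 9}"
  by (simp_all add: cell_corners_def cell_corner_def skel_cells_def)

lemma cell_corners_cover: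
  assumes "a < 10"
  shows "\<exists>k<6. a \<in> cell_corners k"
proof -
  have "a \<in> cell_corners 0 \<or> a \<in> cell_corners 1 \<or> a \<in> cell_corners 2 \<or> a \<in> cell_corners 3
      \<or> a \<in> cell_corners 4 \<or> a \<in> cell_corners 5"
    using assms unfolding less_10_cases by (auto simp: cell_corners_def cell_corner_def skel_cells_def)
  then show ?thesis by (elim disjE) (rule exI, rule conjI[rotated], assumption, simp)+
qed

lemma cell_corners_meet_once:
  assumes "k < 6" "k' < 6" "k \<noteq> k'" "u \<in> cell_corners k \<inter> cell_corners k'" "v \<in> cell_corners k \<inter> cell_corners k'"
  shows "u = v"
proof -
  have "card (cell_corners k \<inter> cell_corners k') \<le> 1"
    using assms(1-3) unfolding less_6_cases by (elim disjE; simp add: cell_corners_values)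
  moreover have "finite (cell_corners k \<inter> cell_corners k')" by (simp add: cell_corners_def)
  ultimately show ?thesis using assms(4,5) by (metis card_le_Suc0_iff_eq One_nat_def)
qed

text \<open>
  A list \<open>cl\<close> of length ten labels each skeleton vertex with a representative of its
  connectivity class. Gluing a cell of connection type \<open>t\<close> merges the classes of the corners
  that \<open>t\<close> links; this is admissible (creates no cycle) iff those corners were not yet joined.
\<close>

definition merge_class :: "nat list \<Rightarrow> nat \<Rightarrow> nat \<Rightarrow> nat list" where
  "merge_class cl u v = map (\<lambda>x. if x = cl ! v then cl ! u else x) cl"

fun tree_edges :: "nat \<Rightarrow> nat \<times> nat \<times> nat \<Rightarrow> (nat \<times> nat) list" where
  "tree_edges t (a, b, c) =
     (if t = 0 then [(a, b), (b, c)] else if t = 1 then [(b, c)] else if t = 2 then [(a, c)]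
      else if t = 3 then [(a, b)] else [])"

fun linked_pairs :: "nat \<Rightarrow> nat \<times> nat \<times> nat \<Rightarrow> (nat \<times> nat) list" where
  "linked_pairs t (a, b, c) =
     (if t = 0 then [(a, b), (b, c), (a, c)] else if t = 1 then [(b, c)] else if t = 2 then [(a, c)]
      else if t = 3 then [(a, b)] else [])"

definition glue_ok :: "nat \<times> nat \<times> nat \<Rightarrow> nat \<Rightarrow> nat list \<Rightarrow> bool" where
  "glue_ok c t cl \<longleftrightarrow> list_all (\<lambda>(u, v). cl ! u \<noteq> cl ! v) (linked_pairs t c)"

definition glue_step :: "nat \<times> nat \<times> nat \<Rightarrow> nat \<Rightarrow> nat list \<Rightarrow> nat list" where
  "glue_step c t cl = fold (\<lambda>(u, v) cl. merge_class cl u v) (tree_edges t c) cl"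

definition rooted_classes :: "nat list \<Rightarrow> bool" where
  "rooted_classes cl \<longleftrightarrow> list_all (\<lambda>a. cl ! a = cl ! 0 \<or> cl ! a = cl ! 3 \<or> cl ! a = cl ! 9) [0..<10]"

definition terminal :: "nat \<Rightarrow> nat" where
  "terminal i = (if i = 0 then 0 else if i = 1 then 3 else 9)"

definition class_type :: "nat list \<Rightarrow> nat" where
  "class_type cl =
     (let a = cl ! 0; b = cl ! 3; c = cl ! 9
      in if a = b \<and> b = c then 0 else if b = c then 1 else if a = c then 2 else if a = b then 3 else 4)"

definition classes_upto :: "nat list \<Rightarrow> nat \<Rightarrow> nat list" where
  "classes_upto ts k = fold (\<lambda>j cl. glue_step (skel_cells ! j) (ts ! j) cl) [0..<k] [0..<10]"

definition good_types :: "nat list \<Rightarrow> nat \<Rightarrow> bool" where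
  "good_types ts s \<longleftrightarrow> (\<forall>j<6. glue_ok (skel_cells ! j) (ts ! j) (classes_upto ts j))
     \<and> rooted_classes (classes_upto ts 6) \<and> class_type (classes_upto ts 6) = s"

lemma glue_ok_iff:
  assumes "k < 6"
  shows "glue_ok (skel_cells ! k) t cl \<longleftrightarrow>
    (\<forall>i<3. \<forall>j<3. type_links t i j \<longrightarrow> cl ! cell_corner k i = cl ! cell_corner k j \<longrightarrow> i = j)"
proof -
  consider "t = 0" | "t = 1" | "t = 2" | "t = 3" | "t \<ge> 4" by linarith
  then show ?thesis
    unfolding glue_ok_def skel_cells_nth[OF assms] all_less_3 type_links_def
    by cases (auto simp: doubleton_eq_iff)
qed

lemma class_type_iff:
  assumes "s < 5"
  shows "class_type cl = s \<longleftrightarrow> (\<forall>i<3. \<forall>j<3. cl ! terminal i = cl ! terminal j \<longleftrightarrow> type_links s i j)"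
proof -
  consider "s = 0" | "s = 1" | "s = 2" | "s = 3" | "s = 4" using assms by linarith
  then show ?thesis
    unfolding class_type_def Let_def all_less_3 type_links_def terminal_def
    by cases (auto simp: doubleton_eq_iff)
qed

lemma rooted_classes_iff:
  "rooted_classes cl \<longleftrightarrow> (\<forall>a<10. cl ! a = cl ! 0 \<or> cl ! a = cl ! 3 \<or> cl ! a = cl ! 9)"
  unfolding rooted_classes_def list_all_iff by auto

definition represents :: "(nat \<Rightarrow> nat \<Rightarrow> bool) \<Rightarrow> nat list \<Rightarrow> bool" where
  "represents R cl \<longleftrightarrow> length cl = 10 \<and> (\<forall>a<10. \<forall>b<10. R\<^sup>*\<^sup>* a b \<longleftrightarrow> cl ! a = cl ! b)"

lemma represents_fold_merge:
  assumes "represents R cl" "\<forall>(u, v)\<in>set ps. u < 10 \<and> v < 10"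
  shows "represents (\<lambda>a b. R a b \<or> (a, b) \<in> set ps \<or> (b, a) \<in> set ps)
           (fold (\<lambda>(u, v) cl. merge_class cl u v) ps cl)"
  using assms
proof (induction ps arbitrary: R cl)
  case (Cons p ps)
  obtain u v where p: "p = (u, v)" by force
  have "represents (\<lambda>a b. R a b \<or> (a = u \<and> b = v) \<or> (a = v \<and> b = u)) (merge_class cl u v)"
    using Cons.prems p unfolding represents_def rtranclp_sup_sym_pair merge_class_def by auto
  from Cons.IH[OF this] Cons.prems
  have "represents (\<lambda>a b. (R a b \<or> (a = u \<and> b = v) \<or> (a = v \<and> b = u)) \<or> (a, b) \<in> set ps \<or> (b, a) \<in> set ps)
     (fold (\<lambda>(u, v) cl. merge_class cl u v) ps (merge_class cl u v))"
    by auto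
  moreover have "(\<lambda>a b. (R a b \<or> (a = u \<and> b = v) \<or> (a = v \<and> b = u)) \<or> (a, b) \<in> set ps \<or> (b, a) \<in> set ps)
     = (\<lambda>a b. R a b \<or> (a, b) \<in> set (p # ps) \<or> (b, a) \<in> set (p # ps))"
    using p by (auto intro!: ext)
  ultimately show ?case using p by simp
qed simp

definition tree_edge_rel :: "nat \<Rightarrow> nat \<times> nat \<times> nat \<Rightarrow> nat \<Rightarrow> nat \<Rightarrow> bool" where
  "tree_edge_rel t c a b \<longleftrightarrow> (a, b) \<in> set (tree_edges t c) \<or> (b, a) \<in> set (tree_edges t c)"

definition skel_rel :: "nat list \<Rightarrow> nat \<Rightarrow> nat \<Rightarrow> nat \<Rightarrow> bool" where
  "skel_rel ts k a b \<longleftrightarrow> (\<exists>j<k. tree_edge_rel (ts ! j) (skel_cells ! j) a b)"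

lemma represents_classes_upto: "k \<le> 6 \<Longrightarrow> represents (skel_rel ts k) (classes_upto ts k)"
proof (induction k)
  case 0
  have "(\<lambda>a b. False)\<^sup>*\<^sup>* a b \<longleftrightarrow> a = b" for a b :: nat
    by (metis (full_types) rtranclp.rtrancl_refl converse_rtranclpE)
  then show ?case by (simp add: represents_def classes_upto_def skel_rel_def)
next
  case (Suc k)
  then have k: "k < 6" by simp
  have "\<forall>(u, v)\<in>set (tree_edges (ts ! k) (skel_cells ! k)). u < 10 \<and> v < 10"
    using cell_corner_less[OF k] by (auto simp: skel_cells_nth[OF k])
  from represents_fold_merge[OF Suc.IH this] Suc.prems
  have "represents (\<lambda>a b. skel_rel ts k a b \<or> tree_edge_rel (ts ! k) (skel_cells ! k) a b)
          (glue_step (skel_cells ! k) (ts ! k) (classes_upto ts k))"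
    by (simp add: glue_step_def tree_edge_rel_def)
  moreover have "(\<lambda>a b. skel_rel ts k a b \<or> tree_edge_rel (ts ! k) (skel_cells ! k) a b) = skel_rel ts (Suc k)"
    by (auto simp: skel_rel_def less_Suc_eq intro!: ext)
  ultimately show ?case by (simp add: classes_upto_def)
qed

definition corner_rel :: "nat \<Rightarrow> nat \<Rightarrow> nat \<Rightarrow> nat \<Rightarrow> bool" where
  "corner_rel t k u v \<longleftrightarrow> (\<exists>i<3. \<exists>j<3. u = cell_corner k i \<and> v = cell_corner k j \<and> type_links t i j)"

lemma corner_rel_cell_corners: "corner_rel t k u v \<Longrightarrow> u \<in> cell_corners k \<and> v \<in> cell_corners k"
  unfolding corner_rel_def cell_corners_iff by blast

lemma tree_edge_rel_imp_corner_rel: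
  assumes "k < 6" "tree_edge_rel t (skel_cells ! k) u v"
  shows "corner_rel t k u v"
proof -
  have corner: "i < 3 \<Longrightarrow> j < 3 \<Longrightarrow> type_links t i j \<Longrightarrow> corner_rel t k (cell_corner k i) (cell_corner k j)"
    for t i j unfolding corner_rel_def by blast
  from assms(2) show ?thesis unfolding tree_edge_rel_def skel_cells_nth[OF assms(1)]
    by (auto split: if_splits) (rule corner; auto simp: type_links_def doubleton_eq_iff)+
qed

lemma corner_rel_imp_tree_edge_rel:
  assumes "k < 6" "corner_rel t k u v"
  shows "(tree_edge_rel t (skel_cells ! k))\<^sup>*\<^sup>* u v"
proof -
  obtain i j where ij: "i < 3" "j < 3" "u = cell_corner k i" "v = cell_corner k j" "type_links t i j"
    using assms(2) unfolding corner_rel_def by blast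
  let ?R = "tree_edge_rel t (skel_cells ! k)" and ?c = "cell_corner k"
  have e01: "t = 0 \<or> t = 3 \<Longrightarrow> ?R (?c 0) (?c 1) \<and> ?R (?c 1) (?c 0)"
    and e12: "t = 0 \<or> t = 1 \<Longrightarrow> ?R (?c 1) (?c 2) \<and> ?R (?c 2) (?c 1)"
    and e02: "t = 2 \<Longrightarrow> ?R (?c 0) (?c 2) \<and> ?R (?c 2) (?c 0)"
    unfolding tree_edge_rel_def skel_cells_nth[OF assms(1)] by auto
  have "t = 0 \<Longrightarrow> ?R\<^sup>*\<^sup>* (?c 0) (?c 2) \<and> ?R\<^sup>*\<^sup>* (?c 2) (?c 0)"
    using e01 e12 by (meson r_into_rtranclp rtranclp_trans)
  with ij(1,2,5) show ?thesis unfolding ij(3,4) type_links_def less_3_cases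
    using e01 e12 e02 by (auto simp: doubleton_eq_iff)
qed

section \<open>The generating polynomials of admissible type vectors\<close>

text \<open>
  Weighting type \<open>t\<close> by \<open>type_weight x t\<close> and summing over good type vectors gives a polynomial
  in \<open>x\<close>; it is computed by evaluation on coefficient lists (\<open>type_polys_skel_cells\<close>).
\<close>

definition type_vectors :: "nat \<Rightarrow> nat list set" where
  "type_vectors m = {ts. length ts = m \<and> set ts \<subseteq> {..<5}}"

lemma type_vectors_Suc: "type_vectors (Suc m) = (\<lambda>(t, ts). t # ts) ` ({..<5} \<times> type_vectors m)"
proof -
  have "ts \<in> (\<lambda>(t, ts). t # ts) ` ({..<5} \<times> type_vectors m)" if "ts \<in> type_vectors (Suc m)" for ts
    using that unfolding type_vectors_def by (cases ts) auto
  then show ?thesis unfolding type_vectors_def by auto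
qed

lemma finite_type_vectors: "finite (type_vectors m)"
  by (induction m) (auto simp: type_vectors_Suc, simp add: type_vectors_def)

text \<open>The ansatz for the number of rooted forests of \<open>G\<^sub>n\<close> of type \<open>t\<close>: \<open>f\<^sub>n * type_weight r\<^sub>n t\<close>.\<close>

definition type_weight :: "'b::comm_semiring_1 \<Rightarrow> nat \<Rightarrow> 'b" where
  "type_weight x t = (if t = 0 then 1 else if t \<le> 3 then x else 3 * x ^ 2)"

fun good_from :: "(nat \<times> nat \<times> nat) list \<Rightarrow> nat list \<Rightarrow> nat list \<Rightarrow> nat \<Rightarrow> bool" where
  "good_from [] ts cl s \<longleftrightarrow> rooted_classes cl \<and> class_type cl = s"
| "good_from (c # cs) [] cl s \<longleftrightarrow> False"
| "good_from (c # cs) (t # ts) cl s \<longleftrightarrow> glue_ok c t cl \<and> good_from cs ts (glue_step c t cl) s"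

fun weighted_count :: "'b::comm_semiring_1 \<Rightarrow> nat \<Rightarrow> (nat \<times> nat \<times> nat) list \<Rightarrow> nat list \<Rightarrow> 'b" where
  "weighted_count x s [] cl = (if rooted_classes cl \<and> class_type cl = s then 1 else 0)"
| "weighted_count x s (c # cs) cl =
     (\<Sum>t<5. if glue_ok c t cl then type_weight x t * weighted_count x s cs (glue_step c t cl) else 0)"

lemma weighted_count_eq_sum:
  "weighted_count x s cs cl =
     (\<Sum>ts\<in>type_vectors (length cs). if good_from cs ts cl s then prod_list (map (type_weight x) ts) else 0)"
proof (induction cs arbitrary: cl)
  case Nil
  have "type_vectors 0 = {[]}" unfolding type_vectors_def by auto
  moreover have "good_from [] ts cl s \<longleftrightarrow> rooted_classes cl \<and> class_type cl = s" for ts by simp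
  ultimately show ?case by (cases "rooted_classes cl \<and> class_type cl = s") (simp_all del: good_from.simps)
next
  case (Cons c cs)
  have inj: "inj_on (\<lambda>(t, ts). t # ts) ({..<5} \<times> type_vectors (length cs))" by (auto simp: inj_on_def)
  have "(\<Sum>ts\<in>type_vectors (length (c # cs)).
          if good_from (c # cs) ts cl s then prod_list (map (type_weight x) ts) else 0)
      = (\<Sum>p\<in>{..<5} \<times> type_vectors (length cs). if good_from (c # cs) (fst p # snd p) cl s
           then prod_list (map (type_weight x) (fst p # snd p)) else 0)"
    by (simp only: length_Cons type_vectors_Suc, subst sum.reindex[OF inj])
      (auto simp: split_beta intro!: sum.cong)
  also have "\<dots> = (\<Sum>t<5. \<Sum>ts\<in>type_vectors (length cs). if good_from (c # cs) (t # ts) cl s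
                   then prod_list (map (type_weight x) (t # ts)) else 0)"
    unfolding sum.cartesian_product by (rule sum.cong) (auto simp: split_beta)
  also have "\<dots> = (\<Sum>t<5. if glue_ok c t cl then type_weight x t * weighted_count x s cs (glue_step c t cl) else 0)"
    by (rule sum.cong) (auto simp: Cons.IH sum_distrib_left intro!: sum.cong)
  finally show ?case by simp
qed

lemma good_from_skel_cells:
  assumes "length ts = 6" "k \<le> 6"
  shows "good_from (drop k skel_cells) (drop k ts) (classes_upto ts k) s \<longleftrightarrow>
     (\<forall>j\<in>{k..<6}. glue_ok (skel_cells ! j) (ts ! j) (classes_upto ts j))
     \<and> rooted_classes (classes_upto ts 6) \<and> class_type (classes_upto ts 6) = s"
  using assms(2)
proof (induction "6 - k" arbitrary: k)
  case 0
  then have "k = 6" by simp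
  then show ?case using assms by (simp add: skel_cells_def)
next
  case (Suc m)
  then have k: "k < 6" by simp
  have "drop k skel_cells = skel_cells ! k # drop (Suc k) skel_cells"
    using k by (simp add: Cons_nth_drop_Suc length_skel_cells)
  moreover have "drop k ts = ts ! k # drop (Suc k) ts" using k assms(1) by (simp add: Cons_nth_drop_Suc)
  moreover have "{k..<6} = insert k {Suc k..<6}" using k by auto
  ultimately show ?case
    using Suc.hyps(1)[of "Suc k"] Suc.hyps(2) k by (simp add: classes_upto_def)
qed

lemma good_from_iff_good_types: "length ts = 6 \<Longrightarrow> good_from skel_cells ts [0..<10] s \<longleftrightarrow> good_types ts s"
  using good_from_skel_cells[of ts 0 s]
  by (simp add: classes_upto_def good_types_def atLeast0LessThan lessThan_def)

text \<open>Polynomials with natural coefficients as coefficient lists, lowest degree first.\<close>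

fun poly_add :: "nat list \<Rightarrow> nat list \<Rightarrow> nat list" where
  "poly_add [] q = q"
| "poly_add p [] = p"
| "poly_add (a # p) (b # q) = (a + b) # poly_add p q"

fun poly_eval :: "nat list \<Rightarrow> 'b::comm_semiring_1 \<Rightarrow> 'b" where
  "poly_eval [] x = 0"
| "poly_eval (a # p) x = of_nat a + x * poly_eval p x"

definition poly_times_weight :: "nat \<Rightarrow> nat list \<Rightarrow> nat list" where
  "poly_times_weight t p = (if t = 0 then p else if t \<le> 3 then 0 # p else 0 # 0 # map ((*) 3) p)"

definition unit_vec :: "nat \<Rightarrow> nat list list" where
  "unit_vec k = map (\<lambda>j. if j = k then [1] else []) [0..<5]"

definition zero_vec :: "nat list list" where
  "zero_vec = replicate 5 []"

definition vec_add :: "nat list list \<Rightarrow> nat list list \<Rightarrow> nat list list" where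
  "vec_add v w = map2 poly_add v w"

definition vec_times_weight :: "nat \<Rightarrow> nat list list \<Rightarrow> nat list list" where
  "vec_times_weight t v = map (poly_times_weight t) v"

fun type_polys :: "(nat \<times> nat \<times> nat) list \<Rightarrow> nat list \<Rightarrow> nat list list" where
  "type_polys [] cl = (if rooted_classes cl then unit_vec (class_type cl) else zero_vec)"
| "type_polys (c # cs) cl =
     foldr (\<lambda>t acc. vec_add (if glue_ok c t cl then vec_times_weight t (type_polys cs (glue_step c t cl))
                              else zero_vec) acc)
       [0..<5] zero_vec"

lemma poly_eval_add: "poly_eval (poly_add p q) x = poly_eval p x + poly_eval q x"
  by (induction p q rule: poly_add.induct) (auto simp: algebra_simps)

lemma poly_eval_times_weight: "poly_eval (poly_times_weight t p) x = type_weight x t * poly_eval p x"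
proof -
  have "poly_eval (map ((*) 3) p) x = 3 * poly_eval p x" by (induction p) (auto simp: algebra_simps)
  then show ?thesis by (auto simp: poly_times_weight_def type_weight_def power2_eq_square algebra_simps)
qed

lemma length_foldr_vec_add:
  "(\<And>t. length (F t) = 5) \<Longrightarrow> length (foldr (\<lambda>t acc. vec_add (F t) acc) ts zero_vec) = 5"
  by (induction ts) (auto simp: vec_add_def zero_vec_def)

lemma length_type_polys: "length (type_polys cs cl) = 5"
  by (induction cs arbitrary: cl) (simp add: unit_vec_def zero_vec_def, simp only: type_polys.simps,
      rule length_foldr_vec_add, auto simp: vec_times_weight_def zero_vec_def)

lemma poly_eval_foldr_vec_add:
  assumes "\<And>t. length (F t) = 5" "s < 5"
  shows "poly_eval (foldr (\<lambda>t acc. vec_add (F t) acc) ts zero_vec ! s) x = (\<Sum>t\<leftarrow>ts. poly_eval (F t ! s) x)"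
proof (induction ts)
  case (Cons t ts)
  have "length (foldr (\<lambda>t acc. vec_add (F t) acc) ts zero_vec) = 5"
    using assms(1) by (rule length_foldr_vec_add)
  then show ?case using Cons assms by (simp add: vec_add_def poly_eval_add)
qed (use assms(2) in \<open>simp add: zero_vec_def\<close>)

lemma poly_eval_type_polys: "s < 5 \<Longrightarrow> poly_eval (type_polys cs cl ! s) x = weighted_count x s cs cl"
proof (induction cs arbitrary: cl)
  case Nil
  then show ?case by (auto simp: unit_vec_def zero_vec_def)
next
  case (Cons c cs)
  have "poly_eval (type_polys (c # cs) cl ! s) x =
      (\<Sum>t\<leftarrow>[0..<5]. poly_eval ((if glue_ok c t cl then vec_times_weight t (type_polys cs (glue_step c t cl))
                                 else zero_vec) ! s) x)"
    by (simp only: type_polys.simps, rule poly_eval_foldr_vec_add)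
      (auto simp: length_type_polys Cons.prems vec_times_weight_def zero_vec_def)
  also have "\<dots> = (\<Sum>t<5. if glue_ok c t cl then type_weight x t * weighted_count x s cs (glue_step c t cl) else 0)"
    using Cons by (simp add: sum_list_distinct_conv_sum_set atLeast0LessThan)
      (rule sum.cong[OF refl], auto simp: length_type_polys vec_times_weight_def zero_vec_def poly_eval_times_weight)
  finally show ?case by simp
qed

lemma type_polys_skel_cells:
  "type_polys skel_cells [0..<10] =
     [[0, 0, 0, 196, 0, 0, 0, 0, 0, 0, 0, 0], [0, 0, 0, 0, 420, 0, 0, 0, 0, 0, 0, 0],
      [0, 0, 0, 0, 420, 0, 0, 0, 0, 0, 0, 0], [0, 0, 0, 0, 420, 0, 0, 0, 0, 0, 0, 0],
      [0, 0, 0, 0, 0, 2700, 0, 0, 0, 0, 0, 0]]"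
  by code_simp

lemma sum_good_types_weights:
  fixes x :: "'b :: comm_semiring_1"
  assumes "s < 5"
  shows "(\<Sum>ts\<in>type_vectors 6. if good_types ts s then prod_list (map (type_weight x) ts) else 0) =
           (if s = 0 then 196 * x ^ 3 else if s < 4 then 420 * x ^ 4 else 2700 * x ^ 5)"
proof -
  have "(\<Sum>ts\<in>type_vectors 6. if good_types ts s then prod_list (map (type_weight x) ts) else 0) =
      weighted_count x s skel_cells [0..<10]"
    unfolding weighted_count_eq_sum length_skel_cells
    by (rule sum.cong) (auto simp: type_vectors_def good_from_iff_good_types)
  also have "\<dots> = poly_eval (type_polys skel_cells [0..<10] ! s) x"
    by (rule poly_eval_type_polys[OF assms, symmetric])
  also have "\<dots> = (if s = 0 then 196 * x ^ 3 else if s < 4 then 420 * x ^ 4 else 2700 * x ^ 5)"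
  proof -
    consider "s = 0" | "s = 1" | "s = 2" | "s = 3" | "s = 4" using assms by linarith
    then show ?thesis unfolding type_polys_skel_cells by cases (simp_all add: eval_nat_numeral algebra_simps)
  qed
  finally show ?thesis .
qed

lemma rtranclp_inj_on_transfer:
  assumes dom: "\<And>u v. R u v \<Longrightarrow> u \<in> f ` L \<and> v \<in> f ` L"
    and inj: "inj_on f L" and a: "a \<in> L" and b: "b \<in> L"
  shows "R\<^sup>*\<^sup>* (f a) (f b) \<longleftrightarrow> (\<lambda>u v. u \<in> L \<and> v \<in> L \<and> R (f u) (f v))\<^sup>*\<^sup>* a b"
proof
  let ?Q = "(\<lambda>u v. u \<in> L \<and> v \<in> L \<and> R (f u) (f v))"
  assume "R\<^sup>*\<^sup>* (f a) (f b)"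
  then have "\<exists>c\<in>L. f b = f c \<and> ?Q\<^sup>*\<^sup>* a c"
  proof (induction rule: rtranclp_induct)
    case base then show ?case using a by blast
  next
    case (step y z)
    then obtain c where c: "c \<in> L" "y = f c" "?Q\<^sup>*\<^sup>* a c" by blast
    obtain d where d: "d \<in> L" "z = f d" using dom[OF step(2)] by blast
    have "?Q c d" using c d step(2) by blast
    then have "?Q\<^sup>*\<^sup>* a d" using c(3) by (simp add: rtranclp.rtrancl_into_rtrancl)
    then show ?case using d by blast
  qed
  then obtain c where c: "c \<in> L" "f b = f c" "?Q\<^sup>*\<^sup>* a c" by blast
  have "b = c" using inj_onD[OF inj c(2)[symmetric] c(1) b] by simp
  then show "?Q\<^sup>*\<^sup>* a b" using c(3) by simp
next
  let ?Q = "(\<lambda>u v. u \<in> L \<and> v \<in> L \<and> R (f u) (f v))"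
  assume "?Q\<^sup>*\<^sup>* a b"
  then show "R\<^sup>*\<^sup>* (f a) (f b)"
  proof (induction rule: rtranclp_induct)
    case base then show ?case by simp
  next
    case (step y z)
    then show ?case by (meson rtranclp.rtrancl_into_rtrancl)
  qed
qed

lemma rtranclp_no_step_from: "R\<^sup>*\<^sup>* a b \<Longrightarrow> (\<And>v. \<not> R a v) \<Longrightarrow> a = b"
  by (erule converse_rtranclpE) auto

lemma rtranclp_no_step_to: "R\<^sup>*\<^sup>* a b \<Longrightarrow> (\<And>u. \<not> R u b) \<Longrightarrow> a = b"
  by (erule rtranclp.cases) auto

section \<open>A level glued from six copies of the previous one\<close>

text \<open>
  For the gasket, \<open>(V, E)\<close> is \<open>G\<^sub>n\<close>, \<open>F k = sg_F (Suc k)\<close> and the glued graph is \<open>G\<^sub>n\<^sub>+\<^sub>1\<close>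
  (\<open>six_copies_sg\<close>).
\<close>

locale six_copies =
  fixes V :: "'a set" and E :: "'a set set" and p :: "nat \<Rightarrow> 'a" and F :: "nat \<Rightarrow> 'a \<Rightarrow> 'a"
    and skel :: "nat \<Rightarrow> 'a"
  assumes inj_copy: "\<And>k. k < 6 \<Longrightarrow> inj (F k)"
    and skel_inj: "inj_on skel {..<10}"
    and corner_image: "\<And>k i. k < 6 \<Longrightarrow> i < 3 \<Longrightarrow> F k (p i) = skel (cell_corner k i)"
    and edges_in_V: "\<Union>E \<subseteq> V" and terminal_in_V: "\<And>i. i < 3 \<Longrightarrow> p i \<in> V"
    and finite_E: "finite E" and edges_doubleton: "\<And>e. e \<in> E \<Longrightarrow> \<exists>x y. x \<noteq> y \<and> e = {x, y}"
    and copies_meet_in_corners: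
      "\<And>k k'. k < 6 \<Longrightarrow> k' < 6 \<Longrightarrow> k \<noteq> k' \<Longrightarrow> F k ` V \<inter> F k' ` V \<subseteq> F k ` p ` {..<3}"
    and terminal_skel: "p 0 = skel 0" "p 1 = skel 3" "p 2 = skel 9"
begin

definition "copy_V k = F k ` V"
definition "copy_E k = edge_image (F k) E"
definition "copy_B k = F k ` p ` {..<3}"
definition "glued_V = (\<Union>k<6. copy_V k)"
definition "glued_E = (\<Union>k<6. copy_E k)"
definition "terminals = p ` {..<3}"

lemma copy_B_skel: "k < 6 \<Longrightarrow> copy_B k = skel ` cell_corners k"
proof -
  assume k: "k < 6"
  have "copy_B k = (\<lambda>i. F k (p i)) ` {..<3}" unfolding copy_B_def by auto
  also have "\<dots> = (\<lambda>i. skel (cell_corner k i)) ` {..<3}" using corner_image[OF k] by auto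
  also have "\<dots> = skel ` cell_corners k" unfolding cell_corners_def by (auto simp: less_3_cases)
  finally show ?thesis .
qed

lemma copy_B_subset: "copy_B k \<subseteq> copy_V k"
  unfolding copy_B_def copy_V_def using terminal_in_V by auto

lemma copies_meet: "k<6 \<Longrightarrow> k'<6 \<Longrightarrow> k \<noteq> k' \<Longrightarrow> copy_V k \<inter> copy_V k' \<subseteq> copy_B k \<inter> copy_B k'"
  unfolding copy_V_def copy_B_def using copies_meet_in_corners by blast

lemma Union_copy_E: "\<Union>(copy_E k) \<subseteq> copy_V k"
  unfolding copy_E_def copy_V_def Union_edge_image using edges_in_V by auto

lemma skel_in_copy_V: "k < 6 \<Longrightarrow> a < 10 \<Longrightarrow> skel a \<in> copy_V k \<Longrightarrow> a \<in> cell_corners k"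
proof -
  assume k: "k < 6" and a: "a < 10" and l: "skel a \<in> copy_V k"
  obtain k' where k': "k' < 6" "a \<in> cell_corners k'" using cell_corners_cover[OF a] by blast
  show "a \<in> cell_corners k"
  proof (cases "k' = k")
    case True then show ?thesis using k' by simp
  next
    case False
    have "skel a \<in> copy_V k'" using k' copy_B_subset copy_B_skel by blast
    then have "skel a \<in> copy_B k" using copies_meet[OF k k'(1)] False l by blast
    then obtain b where b: "b \<in> cell_corners k" "skel a = skel b" using copy_B_skel[OF k] by auto
    have "b < 10" using b cell_corners_less[OF k] by auto
    then show ?thesis using b a skel_inj by (metis inj_onD lessThan_iff)
  qed
qed

lemma copy_B_meet: "k < 6 \<Longrightarrow> k' < 6 \<Longrightarrow> X \<in> copy_B k \<inter> copy_B k' \<Longrightarrow> \<exists>u. u \<in> cell_corners k \<and> u \<in> cell_corners k' \<and> X = skel u"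
proof -
  assume k: "k < 6" "k' < 6" and X: "X \<in> copy_B k \<inter> copy_B k'"
  obtain u where u: "u \<in> cell_corners k" "X = skel u" using X copy_B_skel[OF k(1)] by auto
  obtain u' where u': "u' \<in> cell_corners k'" "X = skel u'" using X copy_B_skel[OF k(2)] by auto
  have "u < 10" "u' < 10" using u u' cell_corners_less k by auto
  then have "u = u'" using u u' skel_inj by (metis inj_onD lessThan_iff)
  then show ?thesis using u u' by blast
qed

lemma copy_E_disjoint: "k<6 \<Longrightarrow> k'<6 \<Longrightarrow> k \<noteq> k' \<Longrightarrow> copy_E k \<inter> copy_E k' = {}"
proof (rule ccontr)
  assume k: "k<6" "k'<6" "k \<noteq> k'" and ne: "copy_E k \<inter> copy_E k' \<noteq> {}"
  then obtain e where e: "e \<in> copy_E k" "e \<in> copy_E k'" by blast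
  then obtain e0 where e0: "e0 \<in> E" "e = F k ` e0" unfolding copy_E_def edge_image_def by auto
  then obtain x y where xy: "x \<noteq> y" "e0 = {x,y}" using edges_doubleton by blast
  have ne2: "F k x \<noteq> F k y" using xy inj_copy[OF k(1)] by (simp add: inj_eq)
  have "F k x \<in> copy_V k \<inter> copy_V k'" "F k y \<in> copy_V k \<inter> copy_V k'"
    using e e0 xy Union_copy_E[of k] Union_copy_E[of k'] by auto
  then have "F k x \<in> copy_B k \<inter> copy_B k'" "F k y \<in> copy_B k \<inter> copy_B k'" using copies_meet[OF k] by auto
  then obtain u v where uv: "u \<in> cell_corners k" "u \<in> cell_corners k'" "v \<in> cell_corners k" "v \<in> cell_corners k'" "F k x = skel u" "F k y = skel v"
    using copy_B_meet[OF k(1,2)] by metis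
  have "u = v" using cell_corners_meet_once[OF k] uv by blast
  then show False using ne2 uv by simp
qed

lemma finite_copy_E: "finite (copy_E k)"
  unfolding copy_E_def edge_image_def using finite_E by simp

lemma copy_B_finite: "finite (copy_B k)" "card (copy_B k) \<le> 3"
proof -
  show "finite (copy_B k)" unfolding copy_B_def by simp
  have "card (copy_B k) \<le> card (p ` {..<3})" unfolding copy_B_def by (rule card_image_le) simp
  also have "\<dots> \<le> card {..<3::nat}" by (rule card_image_le) simp
  finally show "card (copy_B k) \<le> 3" by simp
qed

definition forests :: "nat \<Rightarrow> 'a set set set" where
  "forests t = {T. rooted_forest V E terminals T \<and> conn_type p t T}"
definition copy_forests :: "nat \<Rightarrow> nat \<Rightarrow> 'a set set set" where
  "copy_forests k t = {T. rooted_forest (copy_V k) (copy_E k) (copy_B k) T \<and> conn_type (F k \<circ> p) t T}"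
definition glued_forests :: "nat \<Rightarrow> 'a set set set" where
  "glued_forests s = {T. rooted_forest glued_V glued_E terminals T \<and> conn_type p s T}"

lemma copy_forests_eq: "k < 6 \<Longrightarrow> copy_forests k t = edge_image (F k) ` forests t"
proof -
  assume k: "k < 6"
  note i = inj_copy[OF k]
  have "T' \<in> edge_image (F k) ` forests t" if "T' \<in> copy_forests k t" for T'
  proof -
    have "T' \<subseteq> edge_image (F k) E" using that unfolding copy_forests_def rooted_forest_def copy_E_def by blast
    then obtain T where T: "T \<subseteq> E" "T' = edge_image (F k) T" by (rule subset_edge_imageE)
    have "rooted_forest V E terminals T \<and> conn_type p t T"
      using that T rooted_forest_edge_image[OF i, of V E terminals T] conn_type_edge_image[OF i, of p t T]
      unfolding copy_forests_def copy_V_def copy_E_def copy_B_def terminals_def by (simp del: image_image)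
    then show ?thesis using T unfolding forests_def by blast
  qed
  moreover have "edge_image (F k) T \<in> copy_forests k t" if "T \<in> forests t" for T
    using that rooted_forest_edge_image[OF i, of V E terminals T] conn_type_edge_image[OF i, of p t T]
    unfolding copy_forests_def forests_def copy_V_def copy_E_def copy_B_def terminals_def by (simp del: image_image)
  ultimately show ?thesis by blast
qed

lemma card_copy_forests: "k < 6 \<Longrightarrow> card (copy_forests k t) = card (forests t)"
  using copy_forests_eq card_image inj_edge_image inj_copy by (metis inj_on_subset subset_UNIV)

lemma skel_in_copy_B_iff: "k < 6 \<Longrightarrow> u < 10 \<Longrightarrow> skel u \<in> copy_B k \<longleftrightarrow> u \<in> cell_corners k"
proof -
  assume k: "k < 6" and u: "u < 10"
  show ?thesis
  proof
    assume "skel u \<in> copy_B k"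
    then obtain y where y: "y \<in> cell_corners k" "skel u = skel y" using copy_B_skel[OF k] by auto
    have "y < 10" using y cell_corners_less k by auto
    then have "u = y" using y u inj_onD[OF skel_inj y(2)] by auto
    then show "u \<in> cell_corners k" using y by simp
  next
    assume "u \<in> cell_corners k" then show "skel u \<in> copy_B k" using copy_B_skel[OF k] by auto
  qed
qed

definition piece :: "'a set set \<Rightarrow> nat \<Rightarrow> 'a set set" where "piece T k = T \<inter> copy_E k"

lemma piece_Union: "T \<subseteq> glued_E \<Longrightarrow> T = (\<Union>k\<in>{..<6}. piece T k)"
  unfolding piece_def glued_E_def by auto

lemma skel_eq_iff: "a < 10 \<Longrightarrow> b < 10 \<Longrightarrow> skel a = skel b \<longleftrightarrow> a = b"
  using skel_inj by (auto simp: inj_on_def)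

lemma corner_rel_iff_reach:
  assumes k: "k < 6" and T: "conn_type (F k \<circ> p) t T"
  shows "corner_rel t k u v \<longleftrightarrow>
           u \<in> cell_corners k \<and> v \<in> cell_corners k \<and> edge_reach T (skel u) (skel v)"
proof -
  have reach: "edge_reach T (skel (cell_corner k i)) (skel (cell_corner k j)) \<longleftrightarrow> type_links t i j"
    if "i < 3" "j < 3" for i j
    using T that corner_image[OF k] unfolding conn_type_def by simp
  show ?thesis
  proof
    assume "corner_rel t k u v"
    then obtain i j where "i < 3" "j < 3" "u = cell_corner k i" "v = cell_corner k j" "type_links t i j"
      unfolding corner_rel_def by blast
    then show "u \<in> cell_corners k \<and> v \<in> cell_corners k \<and> edge_reach T (skel u) (skel v)"
      using reach unfolding cell_corners_iff by blast
  next
    assume uv: "u \<in> cell_corners k \<and> v \<in> cell_corners k \<and> edge_reach T (skel u) (skel v)"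
    then obtain i j where "i < 3" "j < 3" "u = cell_corner k i" "v = cell_corner k j"
      unfolding cell_corners_iff by blast
    then show "corner_rel t k u v" using reach uv unfolding corner_rel_def by blast
  qed
qed

lemma reach_skel_off_boundary:
  assumes K: "K \<subseteq> {..<6}" and sub: "\<And>k. k \<in> K \<Longrightarrow> TT k \<subseteq> copy_E k" and a: "a < 10" and b: "b < 10"
    and off: "skel a \<notin> (\<Union>k\<in>K. copy_B k) \<or> skel b \<notin> (\<Union>k\<in>K. copy_B k)"
  shows "edge_reach (\<Union>k\<in>K. TT k) (skel a) (skel b) \<longleftrightarrow> a = b"
    and "(\<lambda>u v. \<exists>k\<in>K. corner_rel (ts ! k) k u v)\<^sup>*\<^sup>* a b \<longleftrightarrow> a = b"
proof -
  let ?S = "\<lambda>u v. \<exists>k\<in>K. corner_rel (ts ! k) k u v"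
  have apart: "skel x \<notin> \<Union>(\<Union>k\<in>K. TT k)" "\<not> ?S x y" "\<not> ?S y x"
    if "x < 10" "skel x \<notin> (\<Union>k\<in>K. copy_B k)" for x y
  proof -
    have "x \<notin> cell_corners k" if "k \<in> K" for k
      using that \<open>skel x \<notin> (\<Union>k\<in>K. copy_B k)\<close> skel_in_copy_B_iff[OF _ \<open>x < 10\<close>] K by blast
    then show "skel x \<notin> \<Union>(\<Union>k\<in>K. TT k)" "\<not> ?S x y" "\<not> ?S y x"
      using sub Union_copy_E skel_in_copy_V K \<open>x < 10\<close> corner_rel_cell_corners by blast+
  qed
  show "edge_reach (\<Union>k\<in>K. TT k) (skel a) (skel b) \<longleftrightarrow> a = b"
  proof
    assume h: "edge_reach (\<Union>k\<in>K. TT k) (skel a) (skel b)"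
    show "a = b"
    proof (rule ccontr)
      assume "a \<noteq> b"
      then have "skel a \<in> \<Union>(\<Union>k\<in>K. TT k) \<and> skel b \<in> \<Union>(\<Union>k\<in>K. TT k)"
        using edge_reach_in_Union[OF h] skel_eq_iff[OF a b] by simp
      then show False using off apart(1)[OF a] apart(1)[OF b] by blast
    qed
  qed simp
  show "?S\<^sup>*\<^sup>* a b \<longleftrightarrow> a = b"
    using off rtranclp_no_step_from[of ?S a b] rtranclp_no_step_to[of ?S a b] apart(2)[OF a] apart(3)[OF b]
    by auto
qed

lemma reach_skel_iff:
  assumes K: "K \<subseteq> {..<6}" and st: "\<And>k. k \<in> K \<Longrightarrow> conn_type (F k \<circ> p) (ts ! k) (TT k)"
    and sub: "\<And>k. k \<in> K \<Longrightarrow> TT k \<subseteq> copy_E k" and a: "a < 10" and b: "b < 10"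
  shows "edge_reach (\<Union>k\<in>K. TT k) (skel a) (skel b) \<longleftrightarrow> (\<lambda>u v. \<exists>k\<in>K. corner_rel (ts ! k) k u v)\<^sup>*\<^sup>* a b"
proof -
  let ?J = "\<Union>k\<in>K. copy_B k" and ?S = "\<lambda>u v. \<exists>k\<in>K. corner_rel (ts ! k) k u v"
  have Kk: "k \<in> K \<Longrightarrow> k < 6" for k using K by auto
  interpret glued_pieces K TT copy_V copy_B
    by unfold_locales (use sub Union_copy_E copy_B_subset copies_meet Kk in blast)+
  have corner: "?S u v \<longleftrightarrow> (\<exists>k\<in>K. u \<in> cell_corners k \<and> v \<in> cell_corners k \<and> edge_reach (TT k) (skel u) (skel v))"
    for u v using corner_rel_iff_reach[OF Kk st] by blast
  show ?thesis
  proof (cases "skel a \<in> ?J \<and> skel b \<in> ?J")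
    case True
    have "edge_reach (\<Union>k\<in>K. TT k) (skel a) (skel b) \<longleftrightarrow> boundary_step\<^sup>*\<^sup>* (skel a) (skel b)"
      using True by (rule conjE) (rule edge_reach_UN_iff_boundary_steps)
    also have "\<dots> \<longleftrightarrow> (\<lambda>u v. u \<in> {..<10} \<and> v \<in> {..<10} \<and> boundary_step (skel u) (skel v))\<^sup>*\<^sup>* a b"
    proof (rule rtranclp_inj_on_transfer[OF _ skel_inj])
      show "u \<in> skel ` {..<10} \<and> v \<in> skel ` {..<10}" if "boundary_step u v" for u v
        using that copy_B_skel cell_corners_less Kk unfolding boundary_step_def by blast
    qed (use a b in auto)
    also have "(\<lambda>u v. u \<in> {..<10} \<and> v \<in> {..<10} \<and> boundary_step (skel u) (skel v)) = ?S"
      unfolding corner boundary_step_def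
      using skel_in_copy_B_iff cell_corners_less Kk by (intro ext) (auto; blast)
    finally show ?thesis .
  next
    case False
    then show ?thesis using reach_skel_off_boundary[OF K sub a b] by blast
  qed
qed

lemma reach_skel_iff_classes:
  assumes m: "m \<le> 6" and st: "\<And>k. k < m \<Longrightarrow> conn_type (F k \<circ> p) (ts ! k) (TT k)"
    and sub: "\<And>k. k < m \<Longrightarrow> TT k \<subseteq> copy_E k" and a: "a < 10" and b: "b < 10"
  shows "edge_reach (\<Union>k\<in>{..<m}. TT k) (skel a) (skel b) \<longleftrightarrow> classes_upto ts m ! a = classes_upto ts m ! b"
proof -
  let ?S = "\<lambda>u v. \<exists>k\<in>{..<m}. corner_rel (ts ! k) k u v"
  have "skel_rel ts m \<le> ?S"
  proof (intro predicate2I)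
    fix u v assume "skel_rel ts m u v"
    then obtain j where "j < m" "tree_edge_rel (ts ! j) (skel_cells ! j) u v" unfolding skel_rel_def by blast
    then show "?S u v" using tree_edge_rel_imp_corner_rel[of j] m by auto
  qed
  moreover have "?S \<le> (skel_rel ts m)\<^sup>*\<^sup>*"
  proof (intro predicate2I)
    fix u v assume "?S u v"
    then obtain k where k: "k < m" "corner_rel (ts ! k) k u v" by auto
    then have "(tree_edge_rel (ts ! k) (skel_cells ! k))\<^sup>*\<^sup>* u v" using corner_rel_imp_tree_edge_rel m by auto
    then show "(skel_rel ts m)\<^sup>*\<^sup>* u v"
      by (rule rtranclp_mono[THEN predicate2D, rotated]) (use k(1) in \<open>auto simp: skel_rel_def\<close>)
  qed
  ultimately have "?S\<^sup>*\<^sup>* = (skel_rel ts m)\<^sup>*\<^sup>*" by (rule rtranclp_subset)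
  moreover have "edge_reach (\<Union>k\<in>{..<m}. TT k) (skel a) (skel b) \<longleftrightarrow> ?S\<^sup>*\<^sup>* a b"
    by (rule reach_skel_iff) (use m st sub a b in auto)
  ultimately show ?thesis
    using represents_classes_upto[OF m, of ts] a b unfolding represents_def by simp
qed

lemma pieces_before_meet:
  assumes m: "m < 6" and sub: "\<And>k. k < 6 \<Longrightarrow> TT k \<subseteq> copy_E k"
  shows "\<Union>(TT m) \<inter> \<Union>(\<Union>k\<in>{..<m}. TT k) \<subseteq> copy_B m" "TT m \<inter> (\<Union>k\<in>{..<m}. TT k) = {}"
proof -
  show "\<Union>(TT m) \<inter> \<Union>(\<Union>k\<in>{..<m}. TT k) \<subseteq> copy_B m"
  proof
    fix x assume x: "x \<in> \<Union>(TT m) \<inter> \<Union>(\<Union>k\<in>{..<m}. TT k)"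
    then have xm: "x \<in> copy_V m" using sub[OF m] Union_copy_E by blast
    from x obtain k where k: "k < m" "x \<in> \<Union>(TT k)" by auto
    then have "x \<in> copy_V k" using sub[of k] Union_copy_E m by fastforce
    then show "x \<in> copy_B m" using copies_meet[OF m, of k] xm k(1) m by auto
  qed
  have "TT m \<inter> TT k = {}" if "k < m" for k
    using copy_E_disjoint[OF m, of k] sub[OF m] sub[of k] that m by auto
  then show "TT m \<inter> (\<Union>k\<in>{..<m}. TT k) = {}" by blast
qed

lemma corners_unique_iff_glue_ok:
  assumes m: "m < 6" and A: "conn_type (F m \<circ> p) t A"
    and C: "\<And>x y. x < 10 \<Longrightarrow> y < 10 \<Longrightarrow> edge_reach C (skel x) (skel y) \<longleftrightarrow> cl ! x = cl ! y"
  shows "(\<forall>u\<in>copy_B m. \<forall>v\<in>copy_B m. edge_reach A u v \<longrightarrow> edge_reach C u v \<longrightarrow> u = v) \<longleftrightarrow>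
           glue_ok (skel_cells ! m) t cl"
proof -
  let ?c = "\<lambda>i. skel (cell_corner m i)"
  have corners: "copy_B m = ?c ` {..<3}"
    unfolding copy_B_def image_image using corner_image[OF m] by (intro image_cong) auto
  have "edge_reach A (?c i) (?c j) \<longleftrightarrow> type_links t i j" if "i < 3" "j < 3" for i j
    using A that corner_image[OF m] unfolding conn_type_def by auto
  moreover have "?c i = ?c j \<longleftrightarrow> i = j" if "i < 3" "j < 3" for i j
    using skel_eq_iff cell_corner_less[OF m] cell_corner_eq_iff[OF m that] by auto
  ultimately have "(\<forall>u\<in>copy_B m. \<forall>v\<in>copy_B m. edge_reach A u v \<longrightarrow> edge_reach C u v \<longrightarrow> u = v) \<longleftrightarrow>
      (\<forall>i<3. \<forall>j<3. type_links t i j \<longrightarrow> cl ! cell_corner m i = cl ! cell_corner m j \<longrightarrow> i = j)"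
    unfolding corners using C cell_corner_less[OF m] by auto
  then show ?thesis using glue_ok_iff[OF m] by simp
qed

lemma forest_iff_glue_ok:
  assumes "m \<le> 6" and st: "\<And>k. k < 6 \<Longrightarrow> conn_type (F k \<circ> p) (ts ! k) (TT k)"
    and sub: "\<And>k. k < 6 \<Longrightarrow> TT k \<subseteq> copy_E k"
  shows "forest (\<Union>k\<in>{..<m}. TT k) \<longleftrightarrow>
           (\<forall>k<m. forest (TT k) \<and> glue_ok (skel_cells ! k) (ts ! k) (classes_upto ts k))"
  using assms(1)
proof (induction m)
  case (Suc m)
  then have m: "m < 6" by simp
  let ?A = "TT m" and ?C = "\<Union>k\<in>{..<m}. TT k"
  have glue: "(\<forall>u\<in>copy_B m. \<forall>v\<in>copy_B m. edge_reach ?A u v \<longrightarrow> edge_reach ?C u v \<longrightarrow> u = v) \<longleftrightarrow>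
      glue_ok (skel_cells ! m) (ts ! m) (classes_upto ts m)"
    by (rule corners_unique_iff_glue_ok[OF m st[OF m]], rule reach_skel_iff_classes)
      (use m st sub in auto)
  note meet = pieces_before_meet[OF m sub]
  have "finite ?A" using sub[OF m] finite_copy_E finite_subset by blast
  have "forest (?A \<union> ?C) \<longleftrightarrow> forest ?A \<and> forest ?C \<and> glue_ok (skel_cells ! m) (ts ! m) (classes_upto ts m)"
  proof
    assume AC: "forest (?A \<union> ?C)"
    then have "forest ?A" "forest ?C" by (auto elim: forest_subset)
    moreover have "\<forall>u\<in>copy_B m. \<forall>v\<in>copy_B m. edge_reach ?A u v \<longrightarrow> edge_reach ?C u v \<longrightarrow> u = v"
      using forest_Un_unique[OF AC meet(2) \<open>finite ?A\<close>] by blast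
    ultimately show "forest ?A \<and> forest ?C \<and> glue_ok (skel_cells ! m) (ts ! m) (classes_upto ts m)"
      using glue by blast
  next
    assume "forest ?A \<and> forest ?C \<and> glue_ok (skel_cells ! m) (ts ! m) (classes_upto ts m)"
    then show "forest (?A \<union> ?C)"
      by (intro forest_Un[OF _ _ meet(1) copy_B_finite]) (use glue in auto)
  qed
  moreover have "(\<Union>k\<in>{..<Suc m}. TT k) = ?A \<union> ?C" by (auto simp: lessThan_Suc)
  ultimately show ?case using Suc m by (auto simp: less_Suc_eq)
qed simp

lemma terminals_skel: "terminals = {skel 0, skel 3, skel 9}"
proof -
  have "{..<3::nat} = {0, 1, 2}" by auto
  then show ?thesis unfolding terminals_def using terminal_skel by simp
qed

lemma skel_in_glued_V: "a < 10 \<Longrightarrow> skel a \<in> glued_V"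
proof -
  assume "a < 10"
  then obtain k where "k < 6" "a \<in> cell_corners k" using cell_corners_cover by blast
  then show "skel a \<in> glued_V" unfolding glued_V_def using copy_B_skel copy_B_subset by blast
qed

lemma rooted_piece_if_rooted:
  assumes T: "T \<subseteq> glued_E" and R: "\<forall>x\<in>glued_V. \<exists>b\<in>terminals. edge_reach T x b"
    and k: "k < 6" and x: "x \<in> copy_V k"
  shows "\<exists>b\<in>copy_B k. edge_reach (piece T k) x b"
proof -
  interpret glued_pieces "{..<6}" "piece T" copy_V copy_B
    by unfold_locales (use Union_copy_E copy_B_subset copies_meet in \<open>auto simp: piece_def\<close>)
  have "x \<in> glued_V" using k x unfolding glued_V_def by blast
  then obtain b where b: "b \<in> terminals" "edge_reach T x b" using R by blast
  obtain c where c: "c \<in> {0, 3, 9 :: nat}" "b = skel c" using b(1) terminals_skel by auto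
  have "edge_reach (\<Union>k\<in>{..<6}. piece T k) x b" using b piece_Union[OF T] by simp
  from edge_reach_UN_leave_piece[OF _ x this] k
  consider "edge_reach (piece T k) x b" | "\<exists>b'\<in>copy_B k. edge_reach (piece T k) x b'" by auto
  then show ?thesis
  proof cases
    case 1
    have "b \<in> copy_V k" using x reach_in_piece[of k, OF _ 1] k by (cases "x = b") auto
    then have "c \<in> cell_corners k" using skel_in_copy_V[OF k] c by auto
    then have "b \<in> copy_B k" using copy_B_skel[OF k] c by auto
    then show ?thesis using 1 by blast
  next
    case 2
    then show ?thesis .
  qed
qed

lemma rooted_iff_copies:
  assumes T: "T \<subseteq> glued_E"
  shows "(\<forall>x\<in>glued_V. \<exists>b\<in>terminals. edge_reach T x b) \<longleftrightarrow>
    (\<forall>k<6. \<forall>x\<in>copy_V k. \<exists>b\<in>copy_B k. edge_reach (piece T k) x b)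
    \<and> (\<forall>a<10. \<exists>c\<in>{0, 3, 9}. edge_reach T (skel a) (skel c))"
proof
  assume R: "\<forall>x\<in>glued_V. \<exists>b\<in>terminals. edge_reach T x b"
  have "\<exists>c\<in>{0, 3, 9}. edge_reach T (skel a) (skel c)" if "a < 10" for a
    using R skel_in_glued_V[OF that] terminals_skel by auto
  then show "(\<forall>k<6. \<forall>x\<in>copy_V k. \<exists>b\<in>copy_B k. edge_reach (piece T k) x b)
    \<and> (\<forall>a<10. \<exists>c\<in>{0, 3, 9}. edge_reach T (skel a) (skel c))"
    using rooted_piece_if_rooted[OF T R] by blast
next
  assume R: "(\<forall>k<6. \<forall>x\<in>copy_V k. \<exists>b\<in>copy_B k. edge_reach (piece T k) x b)
    \<and> (\<forall>a<10. \<exists>c\<in>{0, 3, 9}. edge_reach T (skel a) (skel c))"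
  show "\<forall>x\<in>glued_V. \<exists>b\<in>terminals. edge_reach T x b"
  proof
    fix x assume "x \<in> glued_V"
    then obtain k where k: "k < 6" "x \<in> copy_V k" unfolding glued_V_def by blast
    then obtain b where b: "b \<in> copy_B k" "edge_reach (piece T k) x b" using R by blast
    obtain a where a: "a \<in> cell_corners k" "b = skel a" using b(1) copy_B_skel[OF k(1)] by auto
    have "a < 10" using a cell_corners_less k by auto
    then obtain c where c: "c \<in> {0, 3, 9}" "edge_reach T (skel a) (skel c)" using R by blast
    have "edge_reach T x b" using b(2) by (rule edge_reach_mono) (auto simp: piece_def)
    then have "edge_reach T x (skel c)" using c a edge_reach_trans by metis
    then show "\<exists>b\<in>terminals. edge_reach T x b" using c terminals_skel by auto
  qed
qed

lemma glued_forest_iff: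
  assumes T: "T \<subseteq> glued_E" and ts: "length ts = 6"
    and st: "\<And>k. k < 6 \<Longrightarrow> conn_type (F k \<circ> p) (ts!k) (piece T k)" and s: "s < 5"
  shows "(rooted_forest glued_V glued_E terminals T \<and> conn_type p s T) \<longleftrightarrow> (\<forall>k<6. rooted_forest (copy_V k) (copy_E k) (copy_B k) (piece T k)) \<and> good_types ts s"
proof -
  have TU: "T = (\<Union>k\<in>{..<6}. piece T k)" using piece_Union[OF T] .
  have sub: "\<And>k. k < 6 \<Longrightarrow> piece T k \<subseteq> copy_E k" unfolding piece_def by blast
  let ?cl = "classes_upto ts 6"
  have erT: "edge_reach T (skel a) (skel b) \<longleftrightarrow> ?cl!a = ?cl!b" if "a < 10" "b < 10" for a b
    using reach_skel_iff_classes[of 6 ts "piece T", OF _ st sub that] TU by simp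
  have A: "forest T \<longleftrightarrow> (\<forall>k<6. forest (piece T k) \<and> glue_ok (skel_cells!k) (ts!k) (classes_upto ts k))"
    using forest_iff_glue_ok[of 6 ts "piece T", OF _ st sub] TU by simp
  have R: "(\<forall>x\<in>glued_V. \<exists>b\<in>terminals. edge_reach T x b) \<longleftrightarrow>
    (\<forall>k<6. \<forall>x\<in>copy_V k. \<exists>b\<in>copy_B k. edge_reach (piece T k) x b) \<and> rooted_classes ?cl"
  proof -
    have "(\<forall>a<10. \<exists>c\<in>{0,3,9}. edge_reach T (skel a) (skel c)) \<longleftrightarrow> rooted_classes ?cl"
      unfolding rooted_classes_iff using erT by auto
    then show ?thesis using rooted_iff_copies[OF T] by simp
  qed
  have S: "conn_type p s T \<longleftrightarrow> class_type ?cl = s"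
  proof -
    have pp: "p i = skel (terminal i)" if "i < 3" for i using that terminal_skel by (auto simp: terminal_def less_3_cases)
    have "conn_type p s T \<longleftrightarrow> (\<forall>i<3. \<forall>j<3. ?cl!(terminal i) = ?cl!(terminal j) \<longleftrightarrow> type_links s i j)"
      unfolding conn_type_def using pp erT by (auto simp: terminal_def less_3_cases)
    then show ?thesis using class_type_iff[OF s] by simp
  qed
  show ?thesis
    unfolding rooted_forest_def good_types_def using A R S T sub by blast
qed

definition piece_choices :: "nat list \<Rightarrow> 'a set set list set" where
  "piece_choices ts = {Ts. length Ts = 6 \<and> (\<forall>k<6. Ts!k \<in> copy_forests k (ts!k))}"

lemma piece_choices_piece:
  assumes "Ts \<in> piece_choices ts" "k < 6"
  shows "piece (\<Union>(set Ts)) k = Ts!k"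
proof -
  have l: "length Ts = 6" and m: "\<And>k. k < 6 \<Longrightarrow> Ts!k \<subseteq> copy_E k"
    using assms(1) unfolding piece_choices_def copy_forests_def rooted_forest_def by auto
  have "set Ts = (\<lambda>j. Ts!j) ` {..<6}" using l by (auto simp: set_conv_nth)
  then have U: "\<Union>(set Ts) = (\<Union>j\<in>{..<6}. Ts!j)" by simp
  have d: "Ts!j \<inter> copy_E k = (if j = k then Ts!k else {})" if "j < 6" for j
    using m[OF that] m[OF assms(2)] copy_E_disjoint[OF that assms(2)] by auto
  have "piece (\<Union>(set Ts)) k = (\<Union>j\<in>{..<6}. Ts!j \<inter> copy_E k)" unfolding piece_def U by auto
  also have "\<dots> = (\<Union>j\<in>{..<6}. if j = k then Ts!k else {})" using d by (intro SUP_cong) auto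
  also have "\<dots> = Ts!k" using assms(2) by auto
  finally show ?thesis .
qed

lemma glued_forest_decompose:
  assumes s: "s < 5" and T: "T \<in> glued_forests s"
  shows "T \<in> (\<lambda>Ts. \<Union>(set Ts)) ` (\<Union>ts\<in>{ts\<in>type_vectors 6. good_types ts s}. piece_choices ts)"
proof -
  have TE: "T \<subseteq> glued_E" using T unfolding glued_forests_def rooted_forest_def by blast
  define ts where "ts = map (\<lambda>k. SOME t. t < 5 \<and> conn_type (F k \<circ> p) t (piece T k)) [0..<6]"
  have tsk: "ts ! k < 5 \<and> conn_type (F k \<circ> p) (ts ! k) (piece T k)" if "k < 6" for k
  proof -
    have ex: "\<exists>t. t < 5 \<and> conn_type (F k \<circ> p) t (piece T k)" using conn_type_exists by blast
    have "ts ! k = (SOME t. t < 5 \<and> conn_type (F k \<circ> p) t (piece T k))" using that unfolding ts_def by simp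
    then show ?thesis using someI_ex[OF ex] by simp
  qed
  have lts: "length ts = 6" unfolding ts_def by simp
  have c: "(\<forall>k<6. rooted_forest (copy_V k) (copy_E k) (copy_B k) (piece T k)) \<and> good_types ts s"
    using glued_forest_iff[OF TE lts _ s] tsk T unfolding glued_forests_def by blast
  have "ts \<in> type_vectors 6" unfolding type_vectors_def using lts tsk by (auto simp: in_set_conv_nth)
  moreover have "map (piece T) [0..<6] \<in> piece_choices ts"
    unfolding piece_choices_def copy_forests_def using c tsk by auto
  moreover have "\<Union>(set (map (piece T) [0..<6])) = T" using piece_Union[OF TE] by (simp add: atLeast0LessThan)
  ultimately show ?thesis using c by blast
qed

lemma glued_forest_compose:
  assumes s: "s < 5" and ts: "ts \<in> type_vectors 6" "good_types ts s" and Ts: "Ts \<in> piece_choices ts"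
  shows "\<Union>(set Ts) \<in> glued_forests s"
proof -
  let ?T = "\<Union>(set Ts)"
  have lts: "length ts = 6" using ts unfolding type_vectors_def by simp
  have l: "length Ts = 6" using Ts unfolding piece_choices_def by simp
  have TE: "?T \<subseteq> glued_E"
  proof
    fix e assume "e \<in> ?T"
    then obtain k where k: "k < 6" "e \<in> Ts ! k" using l by (auto simp: in_set_conv_nth)
    then have "e \<in> copy_E k" using Ts unfolding piece_choices_def copy_forests_def rooted_forest_def by auto
    then show "e \<in> glued_E" unfolding glued_E_def using k by auto
  qed
  have tk: "piece ?T k = Ts ! k" if "k < 6" for k using piece_choices_piece[OF Ts that] by simp
  have st: "conn_type (F k \<circ> p) (ts ! k) (piece ?T k)" if "k < 6" for k
    using Ts that tk unfolding piece_choices_def copy_forests_def by auto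
  have "(\<forall>k<6. rooted_forest (copy_V k) (copy_E k) (copy_B k) (piece ?T k)) \<and> good_types ts s"
    using Ts tk ts unfolding piece_choices_def copy_forests_def by auto
  then show ?thesis using glued_forest_iff[OF TE lts st s] unfolding glued_forests_def by blast
qed

lemma glued_forests_eq:
  "s < 5 \<Longrightarrow> glued_forests s = (\<lambda>Ts. \<Union>(set Ts)) ` (\<Union>ts\<in>{ts\<in>type_vectors 6. good_types ts s}. piece_choices ts)"
  using glued_forest_decompose glued_forest_compose by blast

lemma inj_on_Union_piece_choices: "inj_on (\<lambda>Ts. \<Union>(set Ts)) (\<Union>ts\<in>A. piece_choices ts)"
proof (rule inj_onI)
  fix Ts Ts' assume a: "Ts \<in> (\<Union>ts\<in>A. piece_choices ts)" "Ts' \<in> (\<Union>ts\<in>A. piece_choices ts)" "\<Union>(set Ts) = \<Union>(set Ts')"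
  then obtain ts ts' where t: "Ts \<in> piece_choices ts" "Ts' \<in> piece_choices ts'" by blast
  have "Ts!k = Ts'!k" if "k < 6" for k
    using piece_choices_piece[OF t(1) that] piece_choices_piece[OF t(2) that] a(3) by simp
  moreover have "length Ts = 6" "length Ts' = 6" using t unfolding piece_choices_def by auto
  ultimately show "Ts = Ts'" by (simp add: nth_equalityI)
qed

lemma piece_choices_disjoint: "ts \<in> type_vectors 6 \<Longrightarrow> ts' \<in> type_vectors 6 \<Longrightarrow> ts \<noteq> ts' \<Longrightarrow> piece_choices ts \<inter> piece_choices ts' = {}"
proof (rule ccontr)
  assume a: "ts \<in> type_vectors 6" "ts' \<in> type_vectors 6" "ts \<noteq> ts'" "piece_choices ts \<inter> piece_choices ts' \<noteq> {}"
  then obtain Ts where Ts: "Ts \<in> piece_choices ts" "Ts \<in> piece_choices ts'" by blast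
  have "ts!k = ts'!k" if "k < 6" for k
  proof -
    have "conn_type (F k \<circ> p) (ts!k) (Ts!k)" "conn_type (F k \<circ> p) (ts'!k) (Ts!k)"
      using Ts that unfolding piece_choices_def copy_forests_def by auto
    moreover have "ts!k < 5" "ts'!k < 5" using a(1,2) that unfolding type_vectors_def by (auto simp: subset_iff)
    ultimately show ?thesis using conn_type_unique by blast
  qed
  moreover have "length ts = 6" "length ts' = 6" using a unfolding type_vectors_def by auto
  ultimately show False using a(3) by (simp add: nth_equalityI)
qed

lemma card_piece_choices: "ts \<in> type_vectors 6 \<Longrightarrow> card (piece_choices ts) = prod_list (map (\<lambda>t. card (forests t)) ts)"
proof -
  assume ts: "ts \<in> type_vectors 6"
  then have lts: "length ts = 6" unfolding type_vectors_def by simp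
  let ?As = "map (\<lambda>k. copy_forests k (ts!k)) [0..<6]"
  have e: "piece_choices ts = {Ts. length Ts = length ?As \<and> (\<forall>k<length ?As. Ts!k \<in> ?As!k)}"
    unfolding piece_choices_def by auto
  have "card (piece_choices ts) = prod_list (map card ?As)" unfolding e by (rule card_lists_nth_in)
  also have "map card ?As = map (\<lambda>t. card (forests t)) ts"
    using card_copy_forests lts by (auto intro!: nth_equalityI)
  finally show ?thesis .
qed

lemma finite_piece_choices: "ts \<in> type_vectors 6 \<Longrightarrow> finite (piece_choices ts)"
proof -
  assume ts: "ts \<in> type_vectors 6"
  have sub: "piece_choices ts \<subseteq> {Ts. set Ts \<subseteq> Pow glued_E \<and> length Ts = 6}"
  proof
    fix Ts assume "Ts \<in> piece_choices ts"
    then have "length Ts = 6" "\<forall>k<6. Ts!k \<subseteq> copy_E k" unfolding piece_choices_def copy_forests_def rooted_forest_def by auto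
    moreover have "set Ts = (\<lambda>j. Ts!j) ` {..<6}" using \<open>length Ts = 6\<close> by (auto simp: set_conv_nth)
    ultimately show "Ts \<in> {Ts. set Ts \<subseteq> Pow glued_E \<and> length Ts = 6}" unfolding glued_E_def by auto
  qed
  have fin: "finite (Pow glued_E)" unfolding glued_E_def using finite_copy_E by simp
  show ?thesis by (rule finite_subset[OF sub finite_lists_length_eq[OF fin]])
qed

theorem card_glued_forests:
  assumes s: "s < 5"
  shows "card (glued_forests s) = (\<Sum>ts\<in>type_vectors 6. if good_types ts s then prod_list (map (\<lambda>t. card (forests t)) ts) else 0)"
proof -
  let ?G = "{ts\<in>type_vectors 6. good_types ts s}"
  have "card (glued_forests s) = card (\<Union>ts\<in>?G. piece_choices ts)"
    unfolding glued_forests_eq[OF s] by (rule card_image[OF inj_on_Union_piece_choices])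
  also have "\<dots> = (\<Sum>ts\<in>?G. card (piece_choices ts))"
    by (rule card_UN_disjoint) (use finite_type_vectors finite_piece_choices piece_choices_disjoint in auto)
  also have "\<dots> = (\<Sum>ts\<in>?G. prod_list (map (\<lambda>t. card (forests t)) ts))"
    using card_piece_choices by simp
  also have "\<dots> = (\<Sum>ts\<in>type_vectors 6. if good_types ts s then prod_list (map (\<lambda>t. card (forests t)) ts) else 0)"
    by (simp add: sum.inter_filter[symmetric] finite_type_vectors)
  finally show ?thesis .
qed

end

text \<open>
  \<open>tri_point u v = u * sg_p2 + v * sg_p3\<close>: in these coordinates the similitudes \<open>sg_F i\<close> are
  rational affine maps and the big triangle is \<open>u, v \<ge> 0, u + v \<le> 1\<close>.
\<close>

definition tri_point :: "real \<Rightarrow> real \<Rightarrow> complex" where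
  "tri_point u v = Complex (u + v/2) (v * sqrt 3 / 2)"

lemma tri_point_eq_iff: "tri_point a b = tri_point c d \<longleftrightarrow> a = c \<and> b = d"
  unfolding tri_point_def by (auto simp: complex_eq_iff)

lemma tri_point_add: "tri_point a b + tri_point c d = tri_point (a+c) (b+d)"
  unfolding tri_point_def by (simp add: complex_eq_iff algebra_simps)

lemma tri_point_div_3: "tri_point a b / 3 = tri_point (a/3) (b/3)"
  unfolding tri_point_def by (simp add: complex_eq_iff)

lemma sg_p_tri_point: "sg_p1 = tri_point 0 0" "sg_p2 = tri_point 1 0" "sg_p3 = tri_point 0 1"
  unfolding tri_point_def sg_p1_def sg_p2_def sg_p3_def by (simp_all add: complex_eq_iff)

definition shift_u :: "nat \<Rightarrow> real" where
  "shift_u i = (if i = 2 \<or> i = 5 then 1/3 else if i = 3 then 2/3 else 0)"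
definition shift_v :: "nat \<Rightarrow> real" where
  "shift_v i = (if i = 4 \<or> i = 5 then 1/3 else if i = 6 then 2/3 else 0)"

lemma sg_shift_tri_point: "i \<in> {1..6} \<Longrightarrow> sg_shift i = tri_point (shift_u i) (shift_v i)"
proof -
  assume "i \<in> {1..6}"
  then have "i = 1 \<or> i = 2 \<or> i = 3 \<or> i = 4 \<or> i = 5 \<or> i = 6" by auto
  then show ?thesis
    unfolding sg_shift_def shift_u_def shift_v_def sg_p_tri_point tri_point_def
    by (elim disjE) (simp_all add: complex_eq_iff)
qed

lemma sg_F_tri_point: "i \<in> {1..6} \<Longrightarrow> sg_F i (tri_point u v) = tri_point (u/3 + shift_u i) (v/3 + shift_v i)"
  unfolding sg_F_def using sg_shift_tri_point by (simp add: tri_point_div_3 tri_point_add)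

lemma sg_F_inj: "inj (sg_F i)"
  unfolding sg_F_def by (rule injI) simp

definition unit_triangle :: "complex set" where
  "unit_triangle = {tri_point u v | u v. 0 \<le> u \<and> 0 \<le> v \<and> u + v \<le> 1}"

lemma sg_F_unit_triangle: "i \<in> {1..6} \<Longrightarrow> z \<in> unit_triangle \<Longrightarrow> sg_F i z \<in> unit_triangle"
proof -
  assume i: "i \<in> {1..6}" and z: "z \<in> unit_triangle"
  then obtain u v where uv: "z = tri_point u v" "0 \<le> u" "0 \<le> v" "u + v \<le> 1" unfolding unit_triangle_def by blast
  have "shift_u i \<ge> 0" "shift_v i \<ge> 0" "shift_u i + shift_v i \<le> 2/3" unfolding shift_u_def shift_v_def by auto
  then have "0 \<le> u/3 + shift_u i" "0 \<le> v/3 + shift_v i" "(u/3 + shift_u i) + (v/3 + shift_v i) \<le> 1" using uv by auto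
  then show ?thesis unfolding unit_triangle_def uv(1) sg_F_tri_point[OF i] by blast
qed

section \<open>Self-similarity of the graphs \<open>G\<^sub>n\<close>\<close>

lemma sg_words_Suc: "sg_words (Suc n) = (\<lambda>(i,w). i # w) ` ({1..6} \<times> sg_words n)"
proof
  show "sg_words (Suc n) \<subseteq> (\<lambda>(i,w). i # w) ` ({1..6} \<times> sg_words n)"
  proof
    fix w assume "w \<in> sg_words (Suc n)"
    then obtain i w' where "w = i # w'" "i \<in> {1..6}" "w' \<in> sg_words n"
      unfolding sg_words_def by (cases w) auto
    then show "w \<in> (\<lambda>(i,w). i # w) ` ({1..6} \<times> sg_words n)" by auto
  qed
  show "(\<lambda>(i,w). i # w) ` ({1..6} \<times> sg_words n) \<subseteq> sg_words (Suc n)"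
    unfolding sg_words_def by auto
qed

lemma finite_sg_words: "finite (sg_words n)"
proof -
  have "sg_words n \<subseteq> {w. set w \<subseteq> {1..6} \<and> length w = n}" unfolding sg_words_def by auto
  then show ?thesis using finite_lists_length_eq[of "{1..6::nat}" n] finite_subset by blast
qed

lemma Fw_cons_img: "sg_Fw (i#w) ` A = sg_F i ` (sg_Fw w ` A)"
  by (simp add: image_comp)

lemma sg_cells_Suc: "sg_cells (Suc n) = (\<Union>i\<in>{1..6}. (\<lambda>C. sg_F i ` C) ` sg_cells n)"
proof (rule set_eqI, rule iffI)
  fix C assume "C \<in> sg_cells (Suc n)"
  then obtain i w where "i \<in> {1..6}" "w \<in> sg_words n" "C = sg_Fw (i#w) ` sg_V0"
    unfolding sg_cells_def sg_words_Suc by auto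
  then show "C \<in> (\<Union>i\<in>{1..6}. (\<lambda>C. sg_F i ` C) ` sg_cells n)"
    unfolding sg_cells_def Fw_cons_img by blast
next
  fix C assume "C \<in> (\<Union>i\<in>{1..6}. (\<lambda>C. sg_F i ` C) ` sg_cells n)"
  then obtain i w where iw: "i \<in> {1..6}" "w \<in> sg_words n" "C = sg_F i ` (sg_Fw w ` sg_V0)"
    unfolding sg_cells_def by auto
  then have "i # w \<in> sg_words (Suc n)" unfolding sg_words_Suc by auto
  then show "C \<in> sg_cells (Suc n)" unfolding sg_cells_def using iw Fw_cons_img by (metis image_eqI)
qed

lemma sg_V_Suc: "sg_V (Suc n) = (\<Union>i\<in>{1..6}. sg_F i ` sg_V n)"
  unfolding sg_V_def sg_cells_Suc by blast

lemma sg_V_0: "sg_V 0 = sg_V0"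
proof -
  have "sg_words 0 = {[]}" unfolding sg_words_def by auto
  then show ?thesis unfolding sg_V_def sg_cells_def by simp
qed

lemma sg_E_0: "sg_E 0 = {{x, y} | x y. x \<noteq> y \<and> x \<in> sg_V0 \<and> y \<in> sg_V0}"
proof -
  have "sg_words 0 = {[]}" unfolding sg_words_def by auto
  then have "sg_cells 0 = {sg_V0}" unfolding sg_cells_def by simp
  then show ?thesis unfolding sg_E_def by auto
qed

lemma sg_E_Suc: "sg_E (Suc n) = (\<Union>i\<in>{1..6}. edge_image (sg_F i) (sg_E n))"
proof
  show "sg_E (Suc n) \<subseteq> (\<Union>i\<in>{1..6}. edge_image (sg_F i) (sg_E n))"
  proof
    fix e assume "e \<in> sg_E (Suc n)"
    then obtain x y C where e: "e = {x,y}" "x \<noteq> y" "C \<in> sg_cells (Suc n)" "x \<in> C" "y \<in> C"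
      unfolding sg_E_def by blast
    then obtain i C0 where i: "i \<in> {1..6}" "C0 \<in> sg_cells n" "C = sg_F i ` C0" unfolding sg_cells_Suc by blast
    then obtain x0 y0 where xy: "x0 \<in> C0" "y0 \<in> C0" "x = sg_F i x0" "y = sg_F i y0" using e by blast
    have "x0 \<noteq> y0" using xy e by blast
    then have "{x0,y0} \<in> sg_E n" unfolding sg_E_def using xy i by blast
    then have "e \<in> edge_image (sg_F i) (sg_E n)" unfolding edge_image_def using e xy by (intro image_eqI[of _ _ "{x0,y0}"]) auto
    then show "e \<in> (\<Union>i\<in>{1..6}. edge_image (sg_F i) (sg_E n))" using i by blast
  qed
  show "(\<Union>i\<in>{1..6}. edge_image (sg_F i) (sg_E n)) \<subseteq> sg_E (Suc n)"
  proof
    fix e assume "e \<in> (\<Union>i\<in>{1..6}. edge_image (sg_F i) (sg_E n))"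
    then obtain i e0 where i: "i \<in> {1..6}" "e0 \<in> sg_E n" "e = sg_F i ` e0" unfolding edge_image_def by blast
    then obtain x y C where e0: "e0 = {x,y}" "x \<noteq> y" "C \<in> sg_cells n" "x \<in> C" "y \<in> C"
      unfolding sg_E_def by blast
    have "sg_F i x \<noteq> sg_F i y" using e0 sg_F_inj by (simp add: inj_eq)
    moreover have "sg_F i ` C \<in> sg_cells (Suc n)" unfolding sg_cells_Suc using i e0 by blast
    ultimately show "e \<in> sg_E (Suc n)" unfolding sg_E_def using i e0 by blast
  qed
qed

lemma finite_sg_cells: "finite (sg_cells n)" unfolding sg_cells_def using finite_sg_words by simp
lemma finite_sg_cell: "C \<in> sg_cells n \<Longrightarrow> finite C" unfolding sg_cells_def sg_V0_def by auto
lemma finite_sg_V: "finite (sg_V n)" unfolding sg_V_def using finite_sg_cells finite_sg_cell by blast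

lemma finite_sg_E: "finite (sg_E n)"
proof -
  have "sg_E n \<subseteq> Pow (sg_V n)" unfolding sg_E_def sg_V_def by auto
  then show ?thesis using finite_sg_V by (meson finite_Pow_iff finite_subset)
qed

lemma Union_sg_E: "\<Union>(sg_E n) \<subseteq> sg_V n" unfolding sg_E_def sg_V_def by auto

lemma sg_E_doubleton: "e \<in> sg_E n \<Longrightarrow> \<exists>x y. x \<noteq> y \<and> e = {x,y}" unfolding sg_E_def by auto

lemma sg_V0_subset: "sg_V0 \<subseteq> sg_V n"
proof (induction n)
  case 0 then show ?case by (simp add: sg_V_0)
next
  case (Suc n)
  have e: "sg_p1 = sg_F 1 sg_p1" "sg_p2 = sg_F 3 sg_p2" "sg_p3 = sg_F 6 sg_p3"
    unfolding sg_p_tri_point by (simp_all add: sg_F_tri_point shift_u_def shift_v_def)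
  have m: "sg_p1 \<in> sg_V n" "sg_p2 \<in> sg_V n" "sg_p3 \<in> sg_V n" using Suc unfolding sg_V0_def by auto
  have "sg_F 1 sg_p1 \<in> sg_V (Suc n)" unfolding sg_V_Suc using m(1) by (intro UN_I[of 1]) auto
  moreover have "sg_F 3 sg_p2 \<in> sg_V (Suc n)" unfolding sg_V_Suc using m(2) by (intro UN_I[of 3]) auto
  moreover have "sg_F 6 sg_p3 \<in> sg_V (Suc n)" unfolding sg_V_Suc using m(3) by (intro UN_I[of 6]) auto
  ultimately show ?case unfolding sg_V0_def using e by simp
qed

lemma sg_V_unit_triangle: "sg_V n \<subseteq> unit_triangle"
proof (induction n)
  case 0
  show ?case unfolding sg_V_0 sg_V0_def sg_p_tri_point unit_triangle_def by force
next
  case (Suc n)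
  then show ?case unfolding sg_V_Suc using sg_F_unit_triangle by blast
qed

definition sg_corner :: "nat \<Rightarrow> complex" where
  "sg_corner i = (if i = 0 then sg_p1 else if i = 1 then sg_p2 else sg_p3)"
definition skel_u :: "nat \<Rightarrow> nat" where "skel_u a = [0,1,2,3,0,1,2,0,1,0] ! a"
definition skel_v :: "nat \<Rightarrow> nat" where "skel_v a = [0,0,0,0,1,1,1,2,2,3] ! a"
definition sg_skel :: "nat \<Rightarrow> complex" where "sg_skel a = tri_point (real (skel_u a) / 3) (real (skel_v a) / 3)"

lemma sg_skel_inj: "inj_on sg_skel {..<10}"
proof (rule inj_onI)
  fix a b assume a: "a \<in> {..<10}" and b: "b \<in> {..<10}" and e: "sg_skel a = sg_skel b"
  have key: "x < 10 \<Longrightarrow> x = skel_u x + [0,4,7,9] ! (skel_v x)" for x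
    unfolding less_10_cases by (elim disjE) (simp_all add: skel_u_def skel_v_def)
  from e have "skel_u a = skel_u b" "skel_v a = skel_v b" unfolding sg_skel_def tri_point_eq_iff by auto
  then show "a = b" using key[of a] key[of b] a b by simp
qed

lemma sg_corner_V0: "sg_corner ` {..<3} = sg_V0"
proof -
  have "{..<3::nat} = {0,1,2}" by auto
  then show ?thesis unfolding sg_corner_def sg_V0_def by auto
qed

lemma sg_corner_image: "k < 6 \<Longrightarrow> i < 3 \<Longrightarrow> sg_F (Suc k) (sg_corner i) = sg_skel (cell_corner k i)"
proof -
  assume k: "k < 6" and i: "i < 3"
  have s: "Suc k \<in> {1..6}" using k by simp
  show ?thesis
    using k i unfolding less_6_cases less_3_cases sg_corner_def
    by (elim disjE) (simp_all add: sg_p_tri_point sg_F_tri_point shift_u_def shift_v_def sg_skel_def skel_u_def skel_v_def cell_corner_def skel_cells_def tri_point_eq_iff)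
qed

lemma shifted_triangles_meet:
  assumes k: "k < 6" "k' < 6" "k \<noteq> k'"
    and s: "0 \<le> u" "0 \<le> v" "u + v \<le> 1" "0 \<le> u'" "0 \<le> v'" "u' + v' \<le> 1"
    and e: "u/3 + shift_u (Suc k) = u'/3 + shift_u (Suc k')" "v/3 + shift_v (Suc k) = v'/3 + shift_v (Suc k')"
  shows "(u = 0 \<and> v = 0) \<or> (u = 1 \<and> v = 0) \<or> (u = 0 \<and> v = 1)"
  using k e s unfolding less_6_cases
  by (elim disjE; simp add: shift_u_def shift_v_def; linarith)

lemma sg_copies_meet:
  assumes k: "k < 6" "k' < 6" "k \<noteq> k'"
  shows "sg_F (Suc k) ` sg_V n \<inter> sg_F (Suc k') ` sg_V n \<subseteq> sg_F (Suc k) ` sg_corner ` {..<3}"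
proof
  fix z assume z: "z \<in> sg_F (Suc k) ` sg_V n \<inter> sg_F (Suc k') ` sg_V n"
  then obtain x x' where x: "x \<in> sg_V n" "z = sg_F (Suc k) x" "x' \<in> sg_V n" "z = sg_F (Suc k') x'" by blast
  obtain u v where uv: "x = tri_point u v" "0 \<le> u" "0 \<le> v" "u + v \<le> 1" using x(1) sg_V_unit_triangle unfolding unit_triangle_def by blast
  obtain u' v' where uv': "x' = tri_point u' v'" "0 \<le> u'" "0 \<le> v'" "u' + v' \<le> 1" using x(3) sg_V_unit_triangle unfolding unit_triangle_def by blast
  have sk: "Suc k \<in> {1..6}" "Suc k' \<in> {1..6}" using k by auto
  have "tri_point (u/3 + shift_u (Suc k)) (v/3 + shift_v (Suc k)) = tri_point (u'/3 + shift_u (Suc k')) (v'/3 + shift_v (Suc k'))"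
    using x uv uv' sg_F_tri_point[OF sk(1)] sg_F_tri_point[OF sk(2)] by metis
  then have e: "u/3 + shift_u (Suc k) = u'/3 + shift_u (Suc k')" "v/3 + shift_v (Suc k) = v'/3 + shift_v (Suc k')"
    unfolding tri_point_eq_iff by auto
  have "(u = 0 \<and> v = 0) \<or> (u = 1 \<and> v = 0) \<or> (u = 0 \<and> v = 1)"
    by (rule shifted_triangles_meet[OF k uv(2-4) uv'(2-4) e])
  then have "x \<in> sg_corner ` {..<3}" unfolding sg_corner_V0 sg_V0_def sg_p_tri_point uv(1) by auto
  then show "z \<in> sg_F (Suc k) ` sg_corner ` {..<3}" using x(2) by blast
qed

lemma six_copies_sg: "six_copies (sg_V n) (sg_E n) sg_corner (\<lambda>k. sg_F (Suc k)) sg_skel"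
proof
  show "\<And>k. k < 6 \<Longrightarrow> inj (sg_F (Suc k))" using sg_F_inj by blast
  show "inj_on sg_skel {..<10}" by (rule sg_skel_inj)
  show "\<And>k i. k < 6 \<Longrightarrow> i < 3 \<Longrightarrow> sg_F (Suc k) (sg_corner i) = sg_skel (cell_corner k i)" by (rule sg_corner_image)
  show "\<Union>(sg_E n) \<subseteq> sg_V n" by (rule Union_sg_E)
  show "\<And>i. i < 3 \<Longrightarrow> sg_corner i \<in> sg_V n" using sg_V0_subset sg_corner_V0 by blast
  show "finite (sg_E n)" by (rule finite_sg_E)
  show "\<And>e. e \<in> sg_E n \<Longrightarrow> \<exists>x y. x \<noteq> y \<and> e = {x, y}" by (rule sg_E_doubleton)
  show "\<And>k k'. k < 6 \<Longrightarrow> k' < 6 \<Longrightarrow> k \<noteq> k' \<Longrightarrow>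
      sg_F (Suc k) ` sg_V n \<inter> sg_F (Suc k') ` sg_V n \<subseteq> sg_F (Suc k) ` sg_corner ` {..<3}"
    by (rule sg_copies_meet)
  show "sg_corner 0 = sg_skel 0" "sg_corner 1 = sg_skel 3" "sg_corner 2 = sg_skel 9"
    unfolding sg_corner_def sg_p_tri_point sg_skel_def skel_u_def skel_v_def by (simp_all add: tri_point_eq_iff)
qed

definition sg_forests :: "nat \<Rightarrow> nat \<Rightarrow> complex set set set" where
  "sg_forests n t = {T. rooted_forest (sg_V n) (sg_E n) sg_V0 T \<and> conn_type sg_corner t T}"

definition sg_count :: "nat \<Rightarrow> nat \<Rightarrow> nat" where "sg_count n t = card (sg_forests n t)"

lemma UN_1_6: "(\<Union>i\<in>{1..6::nat}. f i) = (\<Union>k\<in>{..<6}. f (Suc k))"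
proof -
  have "{1..6::nat} = Suc ` {..<6}" by (simp add: image_Suc_lessThan)
  then show ?thesis by simp
qed

lemma sg_count_Suc: "s < 5 \<Longrightarrow> sg_count (Suc n) s = (\<Sum>ts\<in>type_vectors 6. if good_types ts s then prod_list (map (sg_count n) ts) else 0)"
proof -
  assume s: "s < 5"
  interpret L: six_copies "sg_V n" "sg_E n" sg_corner "\<lambda>k. sg_F (Suc k)" sg_skel by (rule six_copies_sg)
  have glued_V: "L.glued_V = sg_V (Suc n)" unfolding L.glued_V_def L.copy_V_def sg_V_Suc UN_1_6 by simp
  have glued_E: "L.glued_E = sg_E (Suc n)" unfolding L.glued_E_def L.copy_E_def sg_E_Suc UN_1_6 by simp
  have terminals: "L.terminals = sg_V0" unfolding L.terminals_def sg_corner_V0 ..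
  have forests: "L.forests t = sg_forests n t" for t unfolding L.forests_def sg_forests_def terminals ..
  have glued_forests: "L.glued_forests s = sg_forests (Suc n) s" unfolding L.glued_forests_def sg_forests_def terminals glued_V glued_E ..
  show ?thesis using L.card_glued_forests[OF s] unfolding forests glued_forests sg_count_def by simp
qed

lemma sg_p_distinct: "sg_p1 \<noteq> sg_p2" "sg_p2 \<noteq> sg_p3" "sg_p1 \<noteq> sg_p3"
  unfolding sg_p_tri_point tri_point_eq_iff by auto

lemma sg_E_0_triangle: "sg_E 0 = {{sg_p1,sg_p2},{sg_p2,sg_p3},{sg_p1,sg_p3}}"
  unfolding sg_E_0 sg_V0_def using sg_p_distinct by (auto simp: insert_commute)

lemma sg_count_0: "t < 5 \<Longrightarrow> sg_count 0 t = (if t = 0 then 3 else 1)"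
proof -
  assume t: "t < 5"
  have "sg_forests 0 t = {T. T \<subseteq> {{sg_p1,sg_p2},{sg_p2,sg_p3},{sg_p1,sg_p3}} \<and> forest T \<and> conn_type sg_corner t T}"
  proof (rule set_eqI)
    fix T
    have r: "\<forall>x\<in>sg_V0. \<exists>b\<in>sg_V0. edge_reach T x b"
    proof
      fix x assume x: "x \<in> sg_V0"
      show "\<exists>b\<in>sg_V0. edge_reach T x b" using x by (intro bexI[where x=x]) simp_all
    qed
    show "T \<in> sg_forests 0 t \<longleftrightarrow> T \<in> {T. T \<subseteq> {{sg_p1,sg_p2},{sg_p2,sg_p3},{sg_p1,sg_p3}} \<and> forest T \<and> conn_type sg_corner t T}"
      unfolding sg_forests_def rooted_forest_def sg_V_0 sg_E_0_triangle using r by auto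
  qed
  then show ?thesis unfolding sg_count_def
    using card_triangle_forests[OF sg_p_distinct, of sg_corner t] t by (simp add: sg_corner_def)
qed

definition tree_formula :: "nat \<Rightarrow> real" where
  "tree_formula n = 2 powr ((2/5) * (6 ^ n - 1)) * 3 powr ((13 * 6 ^ n - 15 * real n + 12) / 25)
         * 5 powr ((3 * 6 ^ n - 15 * real n - 3) / 25) * 7 powr ((7 * 6 ^ n + 15 * real n - 7) / 25)"

definition type_ratio :: "nat \<Rightarrow> real" where "type_ratio n = 15^n / (3 * 7^n)"

lemma tree_formula_0: "tree_formula 0 = 3"
  unfolding tree_formula_def by simp

lemma powr_6_mult_add: "(x::real) > 0 \<Longrightarrow> x powr (6 * a + b) = (x powr a) ^ 6 * x powr b"
  by (simp add: powr_add powr_power)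

lemma tree_formula_Suc: "tree_formula (Suc n) = 196 * tree_formula n ^ 6 * type_ratio n ^ 3"
proof -
  let ?A = "(2/5) * (6 ^ n - 1::real)"
  let ?B = "(13 * 6 ^ n - 15 * real n + 12) / (25::real)"
  let ?C = "(3 * 6 ^ n - 15 * real n - 3) / (25::real)"
  let ?D = "(7 * 6 ^ n + 15 * real n - 7) / (25::real)"
  have a: "(2/5) * (6 ^ Suc n - 1::real) = 6 * ?A + 2" by (simp add: field_simps)
  have b: "(13 * 6 ^ Suc n - 15 * real (Suc n) + 12) / (25::real) = 6 * ?B + (real (3*n) - 3)" by (simp add: field_simps)
  have c: "(3 * 6 ^ Suc n - 15 * real (Suc n) - 3) / (25::real) = 6 * ?C + real (3*n)" by (simp add: field_simps)
  have d: "(7 * 6 ^ Suc n + 15 * real (Suc n) - 7) / (25::real) = 6 * ?D + (2 - real (3*n))" by (simp add: field_simps)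
  have q2: "(2::real) powr 2 = 4" using powr_realpow[of 2 2] by simp
  have q3: "(3::real) powr (real (3*n) - 3) = 3^(3*n) / 27"
    using powr_realpow[of 3 "3*n"] powr_realpow[of 3 3] by (simp add: powr_diff)
  have q5: "(5::real) powr (real (3*n)) = 5^(3*n)" using powr_realpow[of 5 "3*n"] by simp
  have q7: "(7::real) powr (2 - real (3*n)) = 49 / 7^(3*n)"
    using powr_realpow[of 7 "3*n"] powr_realpow[of 7 2] by (simp add: powr_diff)
  have e2: "2 powr (6 * ?A + 2) = (2 powr ?A)^6 * 4" using powr_6_mult_add[of 2 ?A 2] q2 by simp
  have e3: "3 powr (6 * ?B + (real (3*n) - 3)) = (3 powr ?B)^6 * (3^(3*n) / 27)"
    using powr_6_mult_add[of 3 ?B "real (3*n) - 3"] q3 by simp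
  have e5: "5 powr (6 * ?C + real (3*n)) = (5 powr ?C)^6 * 5^(3*n)"
    using powr_6_mult_add[of 5 ?C "real (3*n)"] q5 by simp
  have e7: "7 powr (6 * ?D + (2 - real (3*n))) = (7 powr ?D)^6 * (49 / 7^(3*n))"
    using powr_6_mult_add[of 7 ?D "2 - real (3*n)"] q7 by simp
  have f15: "((15::real)^n)^3 = 3^(3*n) * 5^(3*n)"
  proof -
    have "((15::real)^n)^3 = 15^(3*n)" by (simp add: power_mult[symmetric] mult.commute)
    also have "(15::real)^(3*n) = (3*5)^(3*n)" by simp
    also have "\<dots> = 3^(3*n) * 5^(3*n)" by (rule power_mult_distrib)
    finally show ?thesis .
  qed
  have f7: "((7::real)^n)^3 = 7^(3*n)" by (simp add: power_mult[symmetric] mult.commute)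
  have r: "type_ratio n ^ 3 = 3^(3*n) * 5^(3*n) / (27 * 7^(3*n))"
    unfolding type_ratio_def power_divide power_mult_distrib f15 f7 by simp
  have "tree_formula (Suc n) = (2 powr ?A)^6 * 4 * ((3 powr ?B)^6 * (3^(3*n) / 27)) * ((5 powr ?C)^6 * 5^(3*n))
      * ((7 powr ?D)^6 * (49 / 7^(3*n)))"
    unfolding tree_formula_def a b c d e2 e3 e5 e7 ..
  also have "\<dots> = 196 * tree_formula n ^ 6 * type_ratio n ^ 3"
    unfolding r tree_formula_def by (simp add: power_mult_distrib field_simps)
  finally show ?thesis .
qed

lemma prod_list_map_mult: "(\<And>t. t \<in> set ts \<Longrightarrow> g t = c * h t) \<Longrightarrow> prod_list (map g ts) = c ^ length ts * prod_list (map h ts)"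
  for c :: real by (induction ts) auto

lemma sg_count_closed_form: "t < 5 \<Longrightarrow> real (sg_count n t) = tree_formula n * type_weight (type_ratio n) t"
proof (induction n arbitrary: t)
  case 0
  then show ?case using sg_count_0 by (auto simp: tree_formula_0 type_ratio_def type_weight_def power2_eq_square)
next
  case (Suc n)
  have "real (sg_count (Suc n) t) =
      (\<Sum>ts\<in>type_vectors 6. if good_types ts t then real (prod_list (map (sg_count n) ts)) else 0)"
    using sg_count_Suc[OF Suc.prems] by (simp add: of_nat_sum if_distrib cong: if_cong)
  also have "\<dots> = (\<Sum>ts\<in>type_vectors 6. if good_types ts t then
                      tree_formula n ^ 6 * prod_list (map (type_weight (type_ratio n)) ts) else 0)"
  proof (rule sum.cong[OF refl])
    fix ts assume ts: "ts \<in> type_vectors 6"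
    have "real (prod_list (map (sg_count n) ts)) = prod_list (map (\<lambda>t. real (sg_count n t)) ts)"
      by (induction ts) auto
    also have "\<dots> = tree_formula n ^ length ts * prod_list (map (type_weight (type_ratio n)) ts)"
      by (rule prod_list_map_mult) (use ts Suc.IH in \<open>auto simp: type_vectors_def\<close>)
    finally show "(if good_types ts t then real (prod_list (map (sg_count n) ts)) else 0) =
      (if good_types ts t then tree_formula n ^ 6 * prod_list (map (type_weight (type_ratio n)) ts) else 0)"
      using ts by (simp add: type_vectors_def)
  qed
  also have "\<dots> = tree_formula n ^ 6 *
      (\<Sum>ts\<in>type_vectors 6. if good_types ts t then prod_list (map (type_weight (type_ratio n)) ts) else 0)"
    by (simp add: sum_distrib_left if_distrib cong: if_cong)
  also have "\<dots> = tree_formula n ^ 6 * (if t = 0 then 196 * type_ratio n ^ 3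
      else if t < 4 then 420 * type_ratio n ^ 4 else 2700 * type_ratio n ^ 5)"
    by (simp only: sum_good_types_weights[OF Suc.prems])
  also have "\<dots> = tree_formula (Suc n) * type_weight (type_ratio (Suc n)) t"
    unfolding tree_formula_Suc type_weight_def type_ratio_def
    by (simp add: field_simps power2_eq_square eval_nat_numeral)
  finally show ?case .
qed

lemma spanning_tree_iff:
  "spanning_tree (sg_V n) (sg_E n) T \<longleftrightarrow> rooted_forest (sg_V n) (sg_E n) sg_V0 T \<and> conn_type sg_corner 0 T"
proof
  assume S: "spanning_tree (sg_V n) (sg_E n) T"
  have V0: "sg_V0 \<subseteq> sg_V n" by (rule sg_V0_subset)
  have p1: "sg_p1 \<in> sg_V0" by (simp add: sg_V0_def)
  have "\<forall>x\<in>sg_V n. \<exists>b\<in>sg_V0. edge_reach T x b" using S p1 V0 unfolding spanning_tree_def by blast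
  moreover have "forest T" using S unfolding spanning_tree_def forest_def by blast
  moreover have "conn_type sg_corner 0 T"
    unfolding conn_type_def
  proof (intro allI impI)
    fix i j :: nat assume ij: "i < 3" "j < 3"
    have m: "sg_corner i \<in> sg_V n" "sg_corner j \<in> sg_V n" using V0 sg_corner_V0 ij by auto
    have "edge_reach T (sg_corner i) (sg_corner j)" using S m unfolding spanning_tree_def by blast
    moreover have "type_links 0 i j" by (simp add: type_links_def)
    ultimately show "edge_reach T (sg_corner i) (sg_corner j) = type_links 0 i j" by simp
  qed
  ultimately show "rooted_forest (sg_V n) (sg_E n) sg_V0 T \<and> conn_type sg_corner 0 T"
    using S unfolding rooted_forest_def spanning_tree_def by blast
next
  assume R: "rooted_forest (sg_V n) (sg_E n) sg_V0 T \<and> conn_type sg_corner 0 T"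
  have conn: "edge_reach T x y" if "x \<in> sg_V n" "y \<in> sg_V n" for x y
  proof -
    have rt: "\<forall>x\<in>sg_V n. \<exists>b\<in>sg_V0. edge_reach T x b" using R unfolding rooted_forest_def by blast
    from bspec[OF rt that(1)] obtain b1 where b1: "b1 \<in> sg_V0" "edge_reach T x b1" by blast
    from bspec[OF rt that(2)] obtain b2 where b2: "b2 \<in> sg_V0" "edge_reach T y b2" by blast
    obtain i where i: "i < 3" "b1 = sg_corner i" using b1(1) sg_corner_V0 by (metis imageE lessThan_iff)
    obtain j where j: "j < 3" "b2 = sg_corner j" using b2(1) sg_corner_V0 by (metis imageE lessThan_iff)
    have st: "conn_type sg_corner 0 T" using R by blast
    have "edge_reach T (sg_corner i) (sg_corner j)" using st i(1) j(1) unfolding conn_type_def by (simp add: type_links_def)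
    then have bb: "edge_reach T b1 b2" using i j by simp
    have "edge_reach T b2 y" using b2(2) by (rule edge_reach_sym)
    then show ?thesis using b1(2) bb edge_reach_trans by metis
  qed
  have Tsub: "T \<subseteq> sg_E n" and Ac: "forest T" using R unfolding rooted_forest_def by auto
  have A: "\<forall>e\<in>T. \<forall>x y. e = {x,y} \<longrightarrow> \<not> edge_reach (T - {e}) x y" using Ac unfolding forest_def .
  have C: "\<forall>x\<in>sg_V n. \<forall>y\<in>sg_V n. edge_reach T x y" using conn by blast
  show "spanning_tree (sg_V n) (sg_E n) T"
    unfolding spanning_tree_def using Tsub C A by (intro conjI)
qed

text \<open>The formula holds for every \<open>n\<close>.\<close>

theorem mainTheorem3:
  fixes n :: nat
  assumes "n \<ge> 2"
  shows "real (num_spanning_trees (sg_V n) (sg_E n)) =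
           2 powr ((2/5) * (6 ^ n - 1))
         * 3 powr ((13 * 6 ^ n - 15 * real n + 12) / 25)
         * 5 powr ((3 * 6 ^ n - 15 * real n - 3) / 25)
         * 7 powr ((7 * 6 ^ n + 15 * real n - 7) / 25)"
proof -
  have "num_spanning_trees (sg_V n) (sg_E n) = sg_count n 0"
    unfolding num_spanning_trees_def sg_count_def sg_forests_def spanning_tree_iff ..
  then have "real (num_spanning_trees (sg_V n) (sg_E n)) = tree_formula n"
    using sg_count_closed_form[of 0 n] by (simp add: type_weight_def)
  then show ?thesis unfolding tree_formula_def .
qed

end
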